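(* Let $A$ be a unital $C^*$-algebra, $B$ a unital sub-$C^*$-algebra of $A$, and $\varphi\colon A\to\mathbb{C}$ a state such that there exists a conditional expectation $E\colon A\to B$ with $\varphi\circ E=\varphi$. Let $\rho\colon A\to\mathcal{B}(\mathcal{H})$ be the GNS representation associated with $\varphi$, and let $\mathcal{H}_\varphi$, $P_{\mathcal{H}_\varphi}$, $\Pi_{\varphi,B}\colon D_{\varphi,B}\to{\rm U}_A/{\rm U}_B$, $\iota_{\varphi,B}$ and $K_{\varphi,B}$ be as described in the context. Then: (1) the realization operator $\iota_{\varphi,B}\colon\mathcal{H}\to\mathcal{C}({\rm U}_A/{\rm U}_B,D_{\varphi,B})$ is injective; (2) for every $s\in{\rm U}_A/{\rm U}_B$ the map ${\rm ev}_s:=(\iota_{\varphi,B}(\cdot))(s)\colon\mathcal{H}\to(D_{\varphi,B})_s$ is bounded linear; (3) $K_{\varphi,B}(s,t)={\rm ev}_s\,({\rm ev}_t)^*$ for all $s,t\in{\rm U}_A/{\rm U}_B$ (so $K_{\varphi,B}$ is the positive definite reproducing kernel corresponding to $\iota_{\varphi,B}$); (4) $\iota_{\varphi,B}$ intertwines the unitary representation $\rho|_{{\rm U}_A}$ with the natural representation of ${\rm U}_A$ on $\mathcal{C}({\rm U}_A/{\rm U}_B,D_{\varphi,B})$, i.e. $\iota_{\varphi,B}(\rho(v)h)(s)=v\cdot\big(\iota_{\varphi,B}(h)(v^{-1}\cdot s)\big)$ for all $v\in{\rm U}_A$, $h\in\mathcal{H}$, $s\in{\rm U}_A/{\rm 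U}_B$.
   Context: For a unital $C^*$-algebra $A$, ${\rm U}_A=\{u\in A\mid uu^*=u^*u=\mathbf{1}\}$ is its unitary group and ${\rm U}_B={\rm U}_A\cap B$. A conditional expectation $E\colon A\to B$ is a bounded linear idempotent map from $A$ onto $B$ with $\|E\|=1$. GNS: $\mathcal{H}$ is the completion of $A$ modulo the null space of the form $(a_1,a_2)\mapsto\varphi(a_2^*a_1)$, and $\rho(a)$ is induced by left multiplication $a'\mapsto aa'$. $\mathcal{H}_\varphi$ is the closure in $\mathcal{H}$ of the image of $B$ (this is the GNS space of $\varphi|_B$), $\rho_\varphi\colon B\to\mathcal{B}(\mathcal{H}_\varphi)$ is the GNS representation of $B$ for $\varphi|_B$ (the restriction of $\rho(b)$ to $\mathcal{H}_\varphi$), and $P_{\mathcal{H}_\varphi}\colon\mathcal{H}\to\mathcal{H}_\varphi$ is the orthogonal projection. Homogeneous bundle: $D_{\varphi,B}={\rm U}_A\times_{{\rm U}_B}\mathcal{H}_\varphi$ is the quotient of ${\rm U}_A\times\mathcal{H}_\varphi$ by the relation $(u_1,f_1)\sim(u_2,f_2)$ iff there is $v\in{\rm U}_B$ with $u_1=u_2v$ and $f_1=\rho_\varphi(v^{-1})f_2$; $[(u,f)]$ denotes the class, $\Pi_{\varphi,B}([(u,f)])=u{\rm U}_B$. This is a Hermitian vector bundle over the homogeneous manifold ${\rm U}_A/{\rm U}_B$ with fiber inner product $([(u,f)]\mid[(u,g)])=(f\mid g)$, and ${\rm U}_A$ acts on it by $v\cdot[(u,f)]=[(vu,f)]$, covering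 the left action on ${\rm U}_A/{\rm U}_B$. The natural representation of ${\rm U}_A$ on sections is $(v\cdot\sigma)(s)=v\cdot\sigma(v^{-1}\cdot s)$. Realization operator: $\iota_{\varphi,B}(h)(u{\rm U}_B)=[(u,P_{\mathcal{H}_\varphi}(\rho(u)^{-1}h))]$ for $h\in\mathcal{H}$, $u\in{\rm U}_A$. Kernel: $K_{\varphi,B}$ is the section of the bundle over $({\rm U}_A/{\rm U}_B)^2$ with fibers $\mathcal{B}((D_{\varphi,B})_t,(D_{\varphi,B})_s)$ given by $K_{\varphi,B}(u_1{\rm U}_B,u_2{\rm U}_B)[(u_2,f)]=[(u_1,P_{\mathcal{H}_\varphi}(\rho(u_1^{-1}u_2)f))]$ for $u_1,u_2\in{\rm U}_A$, $f\in\mathcal{H}_\varphi$ (these are well defined). A positive definite reproducing kernel on a Hermitian bundle is a continuous section $K$ with $\sum_{j,l}(K(t_l,t_j)\xi_j\mid\xi_l)\ge0$ for all finite families $t_j$, $\xi_j\in D_{t_j}$. *)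

theory Defs
  imports "HOL-Analysis.Analysis"
begin

class complex_vector = real_vector +
  fixes scaleC :: "complex \<Rightarrow> 'a \<Rightarrow> 'a"
  assumes scaleC_add_right: "scaleC a (x + y) = scaleC a x + scaleC a y"
    and scaleC_add_left: "scaleC (a + b) x = scaleC a x + scaleC b x"
    and scaleC_scaleC: "scaleC a (scaleC b x) = scaleC (a * b) x"
    and scaleC_one: "scaleC 1 x = x"
    and scaleR_scaleC: "scaleR r x = scaleC (complex_of_real r) x"

class complex_normed_vector = complex_vector + real_normed_vector +
  assumes norm_scaleC: "norm (scaleC a x) = cmod a * norm x"

text \<open>Complex Hilbert space; the inner product is linear in the first argument.\<close>
class complex_hilbert = complex_normed_vector + complete_space +
  fixes cinner :: "'a \<Rightarrow> 'a \<Rightarrow> complex"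
  assumes cinner_commute: "cinner x y = cnj (cinner y x)"
    and cinner_add_left: "cinner (x + y) z = cinner x z + cinner y z"
    and cinner_scaleC_left: "cinner (scaleC c x) y = c * cinner x y"
    and cinner_self_real: "cinner x x \<in> \<real>"
    and cinner_self_nonneg: "0 \<le> Re (cinner x x)"
    and norm_cinner: "norm x = sqrt (Re (cinner x x))"

class cstar_algebra = complex_normed_vector + real_normed_algebra_1 + complete_space +
  fixes cstar :: "'a \<Rightarrow> 'a"
  assumes cstar_cstar: "cstar (cstar x) = x"
    and cstar_add: "cstar (x + y) = cstar x + cstar y"
    and cstar_scaleC: "cstar (scaleC c x) = scaleC (cnj c) (cstar x)"
    and cstar_mult: "cstar (x * y) = cstar y * cstar x"
    and scaleC_mult_left: "scaleC c x * y = scaleC c (x * y)"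
    and mult_scaleC_right: "x * scaleC c y = scaleC c (x * y)"
    and cstar_identity: "norm (cstar x * x) = (norm x)\<^sup>2"

instantiation complex :: complex_vector
begin
definition scaleC_complex :: "complex \<Rightarrow> complex \<Rightarrow> complex" where
  "scaleC_complex a z = a * z"
instance by standard (auto simp: scaleC_complex_def algebra_simps scaleR_conv_of_real)
end

instance complex :: complex_normed_vector
  by standard (simp add: scaleC_complex_def norm_mult)

definition clinear :: "('a::complex_vector \<Rightarrow> 'b::complex_vector) \<Rightarrow> bool" where
  "clinear f \<longleftrightarrow> (\<forall>x y. f (x + y) = f x + f y) \<and> (\<forall>c x. f (scaleC c x) = scaleC c (f x))"

definition unital_sub_cstar :: "'a::cstar_algebra set \<Rightarrow> bool" where
  "unital_sub_cstar B \<longleftrightarrow> 1 \<in> B \<and> closed B \<and>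
     (\<forall>x\<in>B. \<forall>y\<in>B. x + y \<in> B \<and> x * y \<in> B) \<and>
     (\<forall>x\<in>B. \<forall>c. scaleC c x \<in> B) \<and> (\<forall>x\<in>B. cstar x \<in> B)"

definition is_state :: "('a::cstar_algebra \<Rightarrow> complex) \<Rightarrow> bool" where
  "is_state \<phi> \<longleftrightarrow> clinear \<phi> \<and>
     (\<forall>a. \<phi> (cstar a * a) \<in> \<real> \<and> 0 \<le> Re (\<phi> (cstar a * a))) \<and> \<phi> 1 = 1"

definition cond_exp :: "('a::cstar_algebra \<Rightarrow> 'a) \<Rightarrow> 'a set \<Rightarrow> bool" where
  "cond_exp E B \<longleftrightarrow> clinear E \<and> bounded_linear E \<and> onorm E = 1 \<and>
     range E = B \<and> (\<forall>a. E (E a) = E a)"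

definition unitary_group :: "'a::cstar_algebra set" where
  "unitary_group = {u. u * cstar u = 1 \<and> cstar u * u = 1}"

abbreviation UB :: "'a::cstar_algebra set \<Rightarrow> 'a set" where
  "UB B \<equiv> unitary_group \<inter> B"

definition is_GNS :: "('a::cstar_algebra \<Rightarrow> complex) \<Rightarrow> ('a \<Rightarrow> 'h::complex_hilbert) \<Rightarrow> ('a \<Rightarrow> 'h \<Rightarrow> 'h) \<Rightarrow> bool" where
  "is_GNS \<phi> \<Lambda> \<rho> \<longleftrightarrow> clinear \<Lambda> \<and> closure (range \<Lambda>) = UNIV \<and>
     (\<forall>a1 a2. cinner (\<Lambda> a1) (\<Lambda> a2) = \<phi> (cstar a2 * a1)) \<and>
     (\<forall>a. clinear (\<rho> a) \<and> bounded_linear (\<rho> a)) \<and>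
     (\<forall>a b. \<rho> a (\<Lambda> b) = \<Lambda> (a * b))"

definition Hphi :: "('a::cstar_algebra \<Rightarrow> 'h::complex_hilbert) \<Rightarrow> 'a set \<Rightarrow> 'h set" where
  "Hphi \<Lambda> B = closure (\<Lambda> ` B)"

definition cproj :: "'h::complex_hilbert set \<Rightarrow> 'h \<Rightarrow> 'h" where
  "cproj S h = (THE p. p \<in> S \<and> (\<forall>q\<in>S. cinner (h - p) q = 0))"

definition lcoset :: "'a::cstar_algebra set \<Rightarrow> 'a \<Rightarrow> 'a set" where
  "lcoset B u = (\<lambda>v. u * v) ` UB B"

definition homspace :: "'a::cstar_algebra set \<Rightarrow> 'a set set" where
  "homspace B = lcoset B ` unitary_group"

definition hom_act :: "'a::cstar_algebra \<Rightarrow> 'a set \<Rightarrow> 'a set" where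
  "hom_act v s = (\<lambda>w. v * w) ` s"

text \<open>Equivalence class [(u,f)] of (u,f) in U_A \<times> H_\<phi>.\<close>
definition bcls :: "('a::cstar_algebra \<Rightarrow> 'h \<Rightarrow> 'h) \<Rightarrow> 'a set \<Rightarrow> 'a \<Rightarrow> 'h \<Rightarrow> ('a \<times> 'h) set" where
  "bcls \<rho> B u f = (\<lambda>v. (u * v, \<rho> (cstar v) f)) ` UB B"

definition hbundle :: "('a::cstar_algebra \<Rightarrow> 'h::complex_hilbert) \<Rightarrow> ('a \<Rightarrow> 'h \<Rightarrow> 'h) \<Rightarrow> 'a set \<Rightarrow> ('a \<times> 'h) set set" where
  "hbundle \<Lambda> \<rho> B = {bcls \<rho> B u f | u f. u \<in> unitary_group \<and> f \<in> Hphi \<Lambda> B}"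

definition bproj :: "'a::cstar_algebra set \<Rightarrow> ('a \<times> 'h) set \<Rightarrow> 'a set" where
  "bproj B \<xi> = (THE s. \<forall>p\<in>\<xi>. s = lcoset B (fst p))"

definition fiber :: "('a::cstar_algebra \<Rightarrow> 'h::complex_hilbert) \<Rightarrow> ('a \<Rightarrow> 'h \<Rightarrow> 'h) \<Rightarrow> 'a set \<Rightarrow> 'a set \<Rightarrow> ('a \<times> 'h) set set" where
  "fiber \<Lambda> \<rho> B s = {\<xi> \<in> hbundle \<Lambda> \<rho> B. bproj B \<xi> = s}"

definition fadd :: "('a::cstar_algebra \<Rightarrow> 'h::complex_hilbert) \<Rightarrow> ('a \<Rightarrow> 'h \<Rightarrow> 'h) \<Rightarrow> 'a set \<Rightarrow> ('a \<times> 'h) set \<Rightarrow> ('a \<times> 'h) set \<Rightarrow> ('a \<times> 'h) set" where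
  "fadd \<Lambda> \<rho> B \<xi> \<eta> = (THE \<zeta>. \<exists>u f g. u \<in> unitary_group \<and> f \<in> Hphi \<Lambda> B \<and> g \<in> Hphi \<Lambda> B \<and>
      \<xi> = bcls \<rho> B u f \<and> \<eta> = bcls \<rho> B u g \<and> \<zeta> = bcls \<rho> B u (f + g))"

definition fscale :: "('a::cstar_algebra \<Rightarrow> 'h::complex_hilbert) \<Rightarrow> ('a \<Rightarrow> 'h \<Rightarrow> 'h) \<Rightarrow> 'a set \<Rightarrow> complex \<Rightarrow> ('a \<times> 'h) set \<Rightarrow> ('a \<times> 'h) set" where
  "fscale \<Lambda> \<rho> B c \<xi> = (THE \<zeta>. \<exists>u f. u \<in> unitary_group \<and> f \<in> Hphi \<Lambda> B \<and>
      \<xi> = bcls \<rho> B u f \<and> \<zeta> = bcls \<rho> B u (scaleC c f))"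

definition finner :: "('a::cstar_algebra \<Rightarrow> 'h::complex_hilbert) \<Rightarrow> ('a \<Rightarrow> 'h \<Rightarrow> 'h) \<Rightarrow> 'a set \<Rightarrow> ('a \<times> 'h) set \<Rightarrow> ('a \<times> 'h) set \<Rightarrow> complex" where
  "finner \<Lambda> \<rho> B \<xi> \<eta> = (THE c. \<exists>u f g. u \<in> unitary_group \<and> f \<in> Hphi \<Lambda> B \<and> g \<in> Hphi \<Lambda> B \<and>
      \<xi> = bcls \<rho> B u f \<and> \<eta> = bcls \<rho> B u g \<and> c = cinner f g)"

definition bact :: "'a::cstar_algebra \<Rightarrow> ('a \<times> 'h) set \<Rightarrow> ('a \<times> 'h) set" where
  "bact v \<xi> = (\<lambda>(u, f). (v * u, f)) ` \<xi>"

definition quot_top :: "'x topology \<Rightarrow> ('x \<Rightarrow> 'y) \<Rightarrow> 'y topology" where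
  "quot_top X q = topology (\<lambda>U. U \<subseteq> q ` topspace X \<and> openin X {x \<in> topspace X. q x \<in> U})"

definition hom_top :: "'a::cstar_algebra set \<Rightarrow> 'a set topology" where
  "hom_top B = quot_top (top_of_set unitary_group) (lcoset B)"

definition bundle_top :: "('a::cstar_algebra \<Rightarrow> 'h::complex_hilbert) \<Rightarrow> ('a \<Rightarrow> 'h \<Rightarrow> 'h) \<Rightarrow> 'a set \<Rightarrow> ('a \<times> 'h) set topology" where
  "bundle_top \<Lambda> \<rho> B = quot_top (prod_topology (top_of_set unitary_group) (top_of_set (Hphi \<Lambda> B)))
      (\<lambda>(u, f). bcls \<rho> B u f)"

definition realiz :: "('a::cstar_algebra \<Rightarrow> 'h::complex_hilbert) \<Rightarrow> ('a \<Rightarrow> 'h \<Rightarrow> 'h) \<Rightarrow> 'a set \<Rightarrow> 'h \<Rightarrow> 'a set \<Rightarrow> ('a \<times> 'h) set" where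
  "realiz \<Lambda> \<rho> B h s = (THE \<xi>. \<exists>u\<in>unitary_group. s = lcoset B u \<and>
      \<xi> = bcls \<rho> B u (cproj (Hphi \<Lambda> B) (\<rho> (cstar u) h)))"

definition kern :: "('a::cstar_algebra \<Rightarrow> 'h::complex_hilbert) \<Rightarrow> ('a \<Rightarrow> 'h \<Rightarrow> 'h) \<Rightarrow> 'a set \<Rightarrow> 'a set \<Rightarrow> 'a set \<Rightarrow> ('a \<times> 'h) set \<Rightarrow> ('a \<times> 'h) set" where
  "kern \<Lambda> \<rho> B s t \<xi> = (THE \<zeta>. \<exists>u1 u2 f. u1 \<in> unitary_group \<and> u2 \<in> unitary_group \<and> f \<in> Hphi \<Lambda> B \<and>
      s = lcoset B u1 \<and> t = lcoset B u2 \<and> \<xi> = bcls \<rho> B u2 f \<and>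
      \<zeta> = bcls \<rho> B u1 (cproj (Hphi \<Lambda> B) (\<rho> (cstar u1 * u2) f)))"

end

theory Submission
  imports Defs "HOL-Computational_Algebra.Formal_Power_Series"
begin

text \<open>
  At the coset \<open>uU\<^sub>B\<close> the section \<open>\<iota>(h)\<close> is the class of \<open>(u, P \<rho>(u\<^sup>*) h)\<close>. This is independent
  of the representative because \<open>\<rho>(w)\<close> is unitary for \<open>w \<in> U\<^sub>B\<close> and, together with its
  adjoint \<open>\<rho>(w\<^sup>*)\<close>, leaves \<open>H\<^sub>\<phi>\<close> invariant, so it commutes with \<open>P\<close>. Linearity, boundedness,
  the kernel identity and the intertwining property are then computations on representatives,
  using that \<open>\<rho>\<close> restricts to a unitary representation of \<open>U\<^sub>A\<close>; the adjoint of \<open>ev\<^sub>t\<close> is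
  \<open>[(u, f)] \<mapsto> \<rho>(u) f\<close>.

  For injectivity, \<open>\<iota>(h) = 0\<close> implies \<open>h \<perp> \<rho>(u) \<Lambda>(1) = \<Lambda>(u)\<close> for every unitary \<open>u\<close>. Every element
  of a C*-algebra is a linear combination of unitaries (a self-adjoint \<open>a\<close> with \<open>\<parallel>a\<parallel> < 1\<close> is the
  mean of the unitaries \<open>a \<plusminus> i\<surd>(1 - a\<^sup>2)\<close>), so \<open>h \<perp> \<Lambda>(A)\<close>, which is dense. The square root
  \<open>\<surd>(1 - y)\<close> is given by the binomial series; it also yields the estimate
  \<open>\<phi>(c\<^sup>* z\<^sup>* z c) \<le> \<parallel>z\<parallel>\<^sup>2 \<phi>(c\<^sup>* c)\<close>, hence \<open>\<parallel>\<rho>(z)\<parallel> \<le> \<parallel>z\<parallel>\<close> and the continuity of \<open>\<iota>(h)\<close>.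
\<close>

section \<open>Complex Hilbert spaces\<close>

lemma scaleC_zero_right [simp]: "scaleC c (0::'a::complex_vector) = 0"
proof -
  have "scaleC c (0::'a) = scaleC c 0 + scaleC c 0" by (metis add_0 scaleC_add_right)
  then show ?thesis by simp
qed

lemma scaleC_zero_left [simp]: "scaleC 0 (x::'a::complex_vector) = 0"
  by (metis of_real_0 scaleR_scaleC scaleR_zero_left)

lemma scaleC_minus_left: "scaleC (- c) x = - scaleC c (x::'a::complex_vector)"
  by (metis add.inverse_unique add.right_inverse scaleC_add_left scaleC_zero_left)

lemma scaleC_minus_right: "scaleC c (- x) = - scaleC c (x::'a::complex_vector)"
  by (metis add.inverse_unique add.right_inverse scaleC_add_right scaleC_zero_right)

lemma scaleC_diff_right: "scaleC c (x - y) = scaleC c x - scaleC c (y::'a::complex_vector)"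
  by (metis diff_conv_add_uminus scaleC_add_right scaleC_minus_right)

lemma scaleC_half_double: "scaleC (1/2) (x + x) = (x::'a::complex_vector)"
proof -
  have "scaleC (1/2) (x + x) = scaleC (1/2 + 1/2) x"
    by (simp only: scaleC_add_right scaleC_add_left)
  then show ?thesis by (simp add: scaleC_one)
qed

lemma bounded_linear_scaleC: "bounded_linear (scaleC c :: 'a::complex_normed_vector \<Rightarrow> 'a)"
  by (rule bounded_linear_intro[where K="cmod c"])
     (simp_all add: scaleC_add_right scaleR_scaleC scaleC_scaleC mult.commute norm_scaleC)

lemma cinner_zero_left [simp]: "cinner 0 (y::'h::complex_hilbert) = 0"
  by (metis add.right_neutral add_cancel_right_right cinner_add_left)

lemma cinner_zero_right [simp]: "cinner x (0::'h::complex_hilbert) = 0"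
  by (metis cinner_commute cinner_zero_left complex_cnj_zero)

lemma cinner_minus_left: "cinner (- x) (y::'h::complex_hilbert) = - cinner x y"
  by (metis add.inverse_unique add.right_inverse cinner_add_left cinner_zero_left)

lemma cinner_diff_left: "cinner (x - z) (y::'h::complex_hilbert) = cinner x y - cinner z y"
  by (metis cinner_add_left cinner_minus_left diff_conv_add_uminus)

lemma cinner_add_right: "cinner x (y + z::'h::complex_hilbert) = cinner x y + cinner x z"
  by (metis cinner_add_left cinner_commute complex_cnj_add)

lemma cinner_scaleC_right: "cinner x (scaleC c y::'h::complex_hilbert) = cnj c * cinner x y"
  by (metis cinner_commute cinner_scaleC_left complex_cnj_mult)

lemma cinner_diff_right: "cinner x (y - z::'h::complex_hilbert) = cinner x y - cinner x z"
  by (metis cinner_commute cinner_diff_left complex_cnj_diff)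

lemma cinner_scaleR_left: "cinner (scaleR r x) (y::'h::complex_hilbert) = scaleR r (cinner x y)"
  by (simp add: scaleR_scaleC cinner_scaleC_left scaleC_complex_def)

lemma cinner_scaleR_right: "cinner x (scaleR r y::'h::complex_hilbert) = scaleR r (cinner x y)"
  by (simp add: scaleR_scaleC cinner_scaleC_right scaleC_complex_def)

lemma cinner_self_eq_zero [simp]: "cinner x x = 0 \<longleftrightarrow> x = (0::'h::complex_hilbert)"
  by (metis cinner_zero_left norm_cinner norm_eq_zero real_sqrt_zero zero_complex.simps(1))

lemma power2_norm_eq_cinner: "(norm x)\<^sup>2 = Re (cinner x (x::'h::complex_hilbert))"
  by (simp add: norm_cinner cinner_self_nonneg)

lemma Re_cinner_commute: "Re (cinner y x) = Re (cinner x (y::'h::complex_hilbert))"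
  by (subst cinner_commute) simp

lemma power2_norm_add: "(norm (x + y))\<^sup>2 = (norm x)\<^sup>2 + (norm y)\<^sup>2 + 2 * Re (cinner x (y::'h::complex_hilbert))"
  by (simp add: power2_norm_eq_cinner cinner_add_left cinner_add_right Re_cinner_commute)

lemma power2_norm_diff: "(norm (x - y))\<^sup>2 = (norm x)\<^sup>2 + (norm y)\<^sup>2 - 2 * Re (cinner x (y::'h::complex_hilbert))"
  by (simp add: power2_norm_eq_cinner cinner_diff_left cinner_diff_right Re_cinner_commute)

lemma parallelogram_law:
  "(norm (x + y))\<^sup>2 + (norm (x - y))\<^sup>2 = 2 * (norm x)\<^sup>2 + 2 * (norm (y::'h::complex_hilbert))\<^sup>2"
  by (simp add: power2_norm_add power2_norm_diff)

lemma cauchy_schwarz: "cmod (cinner x y) \<le> norm x * norm (y::'h::complex_hilbert)"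
proof (cases "y = 0")
  case True then show ?thesis by simp
next
  case False
  define c where "c = cinner x y"
  define n where "n = (norm y)\<^sup>2"
  have n: "n > 0" using False by (simp add: n_def)
  define t where "t = c / complex_of_real n"
  \<comment> \<open>expand \<open>0 \<le> \<parallel>x - t y\<parallel>\<^sup>2\<close> for the optimal \<open>t\<close>\<close>
  have "cnj t * c = (c * cnj c) / complex_of_real n" by (simp add: t_def mult.commute)
  also have "\<dots> = complex_of_real ((cmod c)\<^sup>2 / n)"
    by (simp only: complex_norm_square[symmetric] of_real_divide)
  finally have ct: "cnj t * c = complex_of_real ((cmod c)\<^sup>2 / n)" .
  have tn: "(cmod t)\<^sup>2 * n = (cmod c)\<^sup>2 / n"
    using n by (simp add: t_def norm_divide power_divide power2_eq_square)
  have "0 \<le> (norm (x - scaleC t y))\<^sup>2" by simp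
  also have "\<dots> = (norm x)\<^sup>2 + (cmod t)\<^sup>2 * n - 2 * Re (cnj t * c)"
    by (simp add: power2_norm_diff norm_scaleC cinner_scaleC_right power_mult_distrib n_def c_def)
  finally have "(cmod c)\<^sup>2 / n \<le> (norm x)\<^sup>2" unfolding ct tn by simp
  then have "(cmod c)\<^sup>2 \<le> (norm x * norm y)\<^sup>2"
    using n by (simp add: n_def field_simps power_mult_distrib)
  then show ?thesis unfolding c_def by (rule power2_le_imp_le) simp
qed

lemma bounded_bilinear_cinner: "bounded_bilinear (cinner :: 'h::complex_hilbert \<Rightarrow> 'h \<Rightarrow> complex)"
proof
  fix a a' b b' :: 'h and r :: real
  show "cinner (a + a') b = cinner a b + cinner a' b" by (rule cinner_add_left)
  show "cinner a (b + b') = cinner a b + cinner a b'" by (rule cinner_add_right)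
  show "cinner (r *\<^sub>R a) b = r *\<^sub>R cinner a b" by (rule cinner_scaleR_left)
  show "cinner a (r *\<^sub>R b) = r *\<^sub>R cinner a b" by (rule cinner_scaleR_right)
  show "\<exists>K. \<forall>a b. norm (cinner a b) \<le> norm a * norm b * K"
    by (rule exI[of _ 1]) (simp add: cauchy_schwarz)
qed

lemma continuous_on_cinner [continuous_intros]:
  fixes f g :: "'x::topological_space \<Rightarrow> 'h::complex_hilbert"
  shows "continuous_on S f \<Longrightarrow> continuous_on S g \<Longrightarrow> continuous_on S (\<lambda>x. cinner (f x) (g x))"
  by (rule bounded_bilinear.continuous_on[OF bounded_bilinear_cinner])

definition csubspace :: "'a::complex_vector set \<Rightarrow> bool" where
  "csubspace S \<longleftrightarrow> 0 \<in> S \<and> (\<forall>x\<in>S. \<forall>y\<in>S. x + y \<in> S) \<and> (\<forall>c. \<forall>x\<in>S. scaleC c x \<in> S)"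

lemma csubspace_0: "csubspace S \<Longrightarrow> 0 \<in> S"
  and csubspace_add: "csubspace S \<Longrightarrow> x \<in> S \<Longrightarrow> y \<in> S \<Longrightarrow> x + y \<in> S"
  and csubspace_scaleC: "csubspace S \<Longrightarrow> x \<in> S \<Longrightarrow> scaleC c x \<in> S"
  by (simp_all add: csubspace_def)

lemma csubspace_diff: "csubspace S \<Longrightarrow> x \<in> S \<Longrightarrow> y \<in> S \<Longrightarrow> x - y \<in> S"
  using csubspace_add[of S x "scaleC (-1) y"] csubspace_scaleC[of S y "-1"]
  by (simp add: scaleC_minus_left scaleC_one)

lemma csubspace_closure:
  fixes S :: "'a::complex_normed_vector set"
  assumes S: "csubspace S"
  shows "csubspace (closure S)"
proof -
  have translate: "(\<lambda>z. z + y) ` closure T \<subseteq> closure S" if "T \<subseteq> closure S" "\<And>z. z \<in> T \<Longrightarrow> z + y \<in> closure S"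
    for T y
    by (rule image_closure_subset) (use that in \<open>auto intro!: continuous_intros\<close>)
  have "x + y \<in> closure S" if "x \<in> closure S" "y \<in> closure S" for x y
  proof -
    have "z + y \<in> closure S" if "z \<in> S" for z
    proof -
      have "(\<lambda>y. y + z) ` closure S \<subseteq> closure S"
        by (rule translate) (use S that in \<open>auto intro: csubspace_add closure_subset[THEN subsetD]\<close>)
      then show ?thesis using \<open>y \<in> closure S\<close> by (auto simp: add.commute)
    qed
    then have "(\<lambda>z. z + y) ` closure S \<subseteq> closure S"
      by (intro translate) (auto intro: closure_subset[THEN subsetD])
    then show ?thesis using \<open>x \<in> closure S\<close> by auto
  qed
  moreover have "scaleC c x \<in> closure S" if "x \<in> closure S" for c x
  proof -
    have "scaleC c ` closure S \<subseteq> closure S"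
      by (rule image_closure_subset)
         (use S in \<open>auto intro: linear_continuous_on bounded_linear_scaleC csubspace_scaleC
                          closure_subset[THEN subsetD]\<close>)
    then show ?thesis using that by auto
  qed
  ultimately show ?thesis
    using S closure_subset[of S] unfolding csubspace_def by blast
qed

lemma minimizing_sequence_Cauchy:
  fixes S :: "'h::complex_hilbert set"
  assumes midpoint: "\<And>a b. a \<in> S \<Longrightarrow> b \<in> S \<Longrightarrow> scaleR (1/2) (a + b) \<in> S"
    and d: "\<And>q. q \<in> S \<Longrightarrow> d \<le> norm (x - q)" and "0 \<le> d"
    and seq: "\<And>n. p n \<in> S" and lim: "(\<lambda>n. norm (x - p n)) \<longlonglongrightarrow> d"
  shows "Cauchy p"
proof (rule metric_CauchyI)
  fix e :: real assume "e > 0"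
  have "(\<lambda>n. (norm (x - p n))\<^sup>2) \<longlonglongrightarrow> d\<^sup>2" by (intro tendsto_intros lim)
  then have "\<forall>\<^sub>F n in sequentially. (norm (x - p n))\<^sup>2 < d\<^sup>2 + e\<^sup>2 / 4"
    using \<open>e > 0\<close> by (intro order_tendstoD) auto
  then obtain N where N: "\<And>n. n \<ge> N \<Longrightarrow> (norm (x - p n))\<^sup>2 < d\<^sup>2 + e\<^sup>2 / 4"
    by (auto simp: eventually_sequentially)
  show "\<exists>M. \<forall>m\<ge>M. \<forall>n\<ge>M. dist (p m) (p n) < e"
  proof (intro exI allI impI)
    fix m n assume "m \<ge> N" "n \<ge> N"
    \<comment> \<open>the midpoint of \<open>p m\<close> and \<open>p n\<close> lies in \<open>S\<close>, so it is at distance at least \<open>d\<close> from \<open>x\<close>\<close>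
    have "(x - p m) + (x - p n) = scaleR 2 (x - scaleR (1/2) (p m + p n))"
      by (simp add: scaleR_diff_right scaleR_2)
    then have "2 * d \<le> norm ((x - p m) + (x - p n))"
      using d[OF midpoint[OF seq seq, of m n]] by simp
    then have "4 * d\<^sup>2 \<le> (norm ((x - p m) + (x - p n)))\<^sup>2"
      using \<open>0 \<le> d\<close> power_mono[of "2 * d" _ 2] by (simp add: power_mult_distrib)
    moreover have "(norm ((x - p m) - (x - p n)))\<^sup>2 = (norm (p m - p n))\<^sup>2"
      by (simp add: norm_minus_commute)
    ultimately have "(norm (p m - p n))\<^sup>2 < e\<^sup>2"
      using parallelogram_law[of "x - p m" "x - p n"] N[OF \<open>m \<ge> N\<close>] N[OF \<open>n \<ge> N\<close>] by linarith
    then show "dist (p m) (p n) < e"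
      using \<open>e > 0\<close> by (simp add: dist_norm power_less_imp_less_base)
  qed
qed

lemma nearest_point_exists:
  fixes S :: "'h::complex_hilbert set"
  assumes "closed S" "S \<noteq> {}"
    and midpoint: "\<And>a b. a \<in> S \<Longrightarrow> b \<in> S \<Longrightarrow> scaleR (1/2) (a + b) \<in> S"
  shows "\<exists>p\<in>S. \<forall>q\<in>S. norm (x - p) \<le> norm (x - q)"
proof -
  define d where "d = infdist x S"
  have d: "d \<le> norm (x - q)" if "q \<in> S" for q
    using infdist_le[OF that, of x] by (simp add: d_def dist_norm)
  have "\<exists>q\<in>S. norm (x - q) < d + inverse (real (Suc n))" for n
  proof -
    have "bdd_below ((\<lambda>a. dist x a) ` S)" by (rule bdd_belowI[of _ 0]) auto
    moreover have "(INF a\<in>S. dist x a) < d + inverse (real (Suc n))"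
      by (simp add: d_def infdist_notempty[OF \<open>S \<noteq> {}\<close>])
    ultimately show ?thesis using cINF_less_iff[OF \<open>S \<noteq> {}\<close>] by (auto simp: dist_norm)
  qed
  then obtain p where pS: "\<And>n. p n \<in> S" and p: "\<And>n. norm (x - p n) < d + inverse (real (Suc n))"
    by metis
  have lim: "(\<lambda>n. norm (x - p n)) \<longlonglongrightarrow> d"
  proof (rule tendsto_sandwich)
    show "\<forall>\<^sub>F n in sequentially. d \<le> norm (x - p n)" using d pS by simp
    show "\<forall>\<^sub>F n in sequentially. norm (x - p n) \<le> d + inverse (real (Suc n))"
      by (intro always_eventually allI less_imp_le p)
    show "(\<lambda>n. d + inverse (real (Suc n))) \<longlonglongrightarrow> d"
      using tendsto_add[OF tendsto_const LIMSEQ_inverse_real_of_nat, of d] by simp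
  qed simp
  have "Cauchy p"
    by (rule minimizing_sequence_Cauchy[OF midpoint d _ pS lim])
       (auto simp: d_def infdist_nonneg)
  then obtain p0 where p0: "p \<longlonglongrightarrow> p0" using Cauchy_convergent_iff convergent_def by blast
  have "(\<lambda>n. norm (x - p n)) \<longlonglongrightarrow> norm (x - p0)" by (intro tendsto_intros p0)
  then have "norm (x - p0) = d" using lim by (rule LIMSEQ_unique)
  moreover have "p0 \<in> S" by (rule closed_sequentially[OF \<open>closed S\<close> pS p0])
  ultimately show ?thesis using d by auto
qed

lemma nearest_point_orthogonal:
  fixes S :: "'h::complex_hilbert set"
  assumes S: "csubspace S" and "p \<in> S" and nearest: "\<And>q. q \<in> S \<Longrightarrow> norm (x - p) \<le> norm (x - q)"
    and "q \<in> S"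
  shows "cinner (x - p) q = 0"
proof -
  define z where "z = x - p"
  define c where "c = cinner z q"
  define t where "t = 1 / ((norm q)\<^sup>2 + 1)"
  have q1: "(norm q)\<^sup>2 + 1 > 0" by (simp add: add_nonneg_pos)
  then have "t > 0" by (simp add: t_def)
  \<comment> \<open>compare \<open>p\<close> with \<open>p + t c q\<close>; for small \<open>t\<close> this is closer to \<open>x\<close> unless \<open>c = 0\<close>\<close>
  define w where "w = scaleC (complex_of_real t * c) q"
  have "p + w \<in> S" unfolding w_def by (intro csubspace_add csubspace_scaleC S \<open>p \<in> S\<close> \<open>q \<in> S\<close>)
  then have "norm z \<le> norm (z - w)" using nearest by (simp add: z_def algebra_simps)
  then have "(norm z)\<^sup>2 \<le> (norm (z - w))\<^sup>2" by (intro power_mono) auto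
  also have "\<dots> = (norm z)\<^sup>2 + (norm w)\<^sup>2 - 2 * Re (cinner z w)" by (rule power2_norm_diff)
  also have "cinner z w = complex_of_real (t * (cmod c)\<^sup>2)"
    using complex_norm_square[of c]
    by (simp add: w_def cinner_scaleC_right c_def[symmetric] mult.commute mult.left_commute)
  also have "(norm w)\<^sup>2 = t\<^sup>2 * (cmod c)\<^sup>2 * (norm q)\<^sup>2"
    using \<open>t > 0\<close> by (simp add: w_def norm_scaleC norm_mult power_mult_distrib)
  finally have "2 * (t * (cmod c)\<^sup>2) \<le> t\<^sup>2 * (cmod c)\<^sup>2 * (norm q)\<^sup>2" by simp
  then have "2 * (cmod c)\<^sup>2 \<le> t * (cmod c)\<^sup>2 * (norm q)\<^sup>2"
    using \<open>t > 0\<close> by (simp add: power2_eq_square mult.assoc mult.left_commute)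
  also have "\<dots> = (cmod c)\<^sup>2 * ((norm q)\<^sup>2 / ((norm q)\<^sup>2 + 1))"
    by (simp add: t_def)
  also have "\<dots> \<le> (cmod c)\<^sup>2 * 1"
    using q1 by (intro mult_left_mono) auto
  finally have "(cmod c)\<^sup>2 \<le> 0" by simp
  then show ?thesis by (simp add: c_def z_def)
qed

lemma cproj_unique:
  assumes S: "csubspace S" and "p \<in> S" and orth: "\<And>q. q \<in> S \<Longrightarrow> cinner (x - p) q = 0"
  shows "cproj S x = p"
  unfolding cproj_def
proof (rule the_equality)
  show "p \<in> S \<and> (\<forall>q\<in>S. cinner (x - p) q = 0)" using assms by blast
  fix p' assume p': "p' \<in> S \<and> (\<forall>q\<in>S. cinner (x - p') q = 0)"
  then have "p' - p \<in> S" using S \<open>p \<in> S\<close> by (simp add: csubspace_diff)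
  then have "cinner ((x - p) - (x - p')) (p' - p) = 0"
    using p' orth by (simp add: cinner_diff_left)
  then show "p' = p" by simp
qed

context
  fixes S :: "'h::complex_hilbert set"
  assumes S: "csubspace S" and closed: "closed S"
begin

lemma cproj_in_orth: "cproj S x \<in> S \<and> (\<forall>q\<in>S. cinner (x - cproj S x) q = 0)"
proof -
  have "\<exists>p\<in>S. \<forall>q\<in>S. norm (x - p) \<le> norm (x - q)"
    by (rule nearest_point_exists[OF closed])
       (use S in \<open>auto simp: scaleR_scaleC intro: csubspace_0 csubspace_add csubspace_scaleC\<close>)
  then obtain p where "p \<in> S" "\<And>q. q \<in> S \<Longrightarrow> norm (x - p) \<le> norm (x - q)" by blast
  then have "\<forall>q\<in>S. cinner (x - p) q = 0" using nearest_point_orthogonal[OF S] by blast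
  with \<open>p \<in> S\<close> show ?thesis using cproj_unique[OF S] by simp
qed

lemma cproj_in: "cproj S x \<in> S"
  using cproj_in_orth by blast

lemma cproj_orth: "q \<in> S \<Longrightarrow> cinner (x - cproj S x) q = 0"
  using cproj_in_orth by blast

lemma cinner_cproj_left: "q \<in> S \<Longrightarrow> cinner (cproj S x) q = cinner x q"
  using cproj_orth[of q x] by (simp add: cinner_diff_left)

lemma cproj_add: "cproj S (x + y) = cproj S x + cproj S y"
proof (rule cproj_unique[OF S])
  show "cproj S x + cproj S y \<in> S" by (intro csubspace_add[OF S] cproj_in)
  fix q assume "q \<in> S"
  have "x + y - (cproj S x + cproj S y) = (x - cproj S x) + (y - cproj S y)" by simp
  then show "cinner (x + y - (cproj S x + cproj S y)) q = 0"
    using \<open>q \<in> S\<close> by (simp only: cinner_add_left cproj_orth) simp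
qed

lemma cproj_scaleC: "cproj S (scaleC c x) = scaleC c (cproj S x)"
proof (rule cproj_unique[OF S])
  show "scaleC c (cproj S x) \<in> S" by (intro csubspace_scaleC[OF S] cproj_in)
  fix q assume "q \<in> S"
  then show "cinner (scaleC c x - scaleC c (cproj S x)) q = 0"
    by (simp add: cinner_scaleC_left cproj_orth flip: scaleC_diff_right)
qed

lemma cproj_diff: "cproj S (x - y) = cproj S x - cproj S y"
proof (rule cproj_unique[OF S])
  show "cproj S x - cproj S y \<in> S" by (intro csubspace_diff[OF S] cproj_in)
  fix q assume "q \<in> S"
  have "x - y - (cproj S x - cproj S y) = (x - cproj S x) - (y - cproj S y)" by simp
  then show "cinner (x - y - (cproj S x - cproj S y)) q = 0"
    using \<open>q \<in> S\<close> by (simp only: cinner_diff_left[of "x - cproj S x"] cproj_orth) simp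
qed

lemma norm_cproj_le: "norm (cproj S x) \<le> norm x"
proof -
  have "cinner (cproj S x) (x - cproj S x) = 0"
    using cproj_orth[OF cproj_in, of x] by (metis cinner_commute complex_cnj_zero)
  then have "(norm x)\<^sup>2 = (norm (cproj S x))\<^sup>2 + (norm (x - cproj S x))\<^sup>2"
    using power2_norm_add[of "cproj S x" "x - cproj S x"] by simp
  then show ?thesis by (simp add: power2_le_imp_le)
qed

lemma continuous_on_cproj: "continuous_on X (cproj S)"
proof (rule lipschitz_on_continuous_on)
  show "1-lipschitz_on X (cproj S)"
    by (rule lipschitz_onI) (use norm_cproj_le in \<open>simp_all add: dist_norm flip: cproj_diff\<close>)
qed

lemma cproj_commute:
  assumes T: "\<And>x. x \<in> S \<Longrightarrow> T x \<in> S" and T': "\<And>x. x \<in> S \<Longrightarrow> T' x \<in> S"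
    and adjoint: "\<And>x y. cinner (T x) y = cinner x (T' y)"
    and diff: "\<And>x y. T (x - y) = T x - T y"
  shows "cproj S (T x) = T (cproj S x)"
  by (rule cproj_unique[OF S T[OF cproj_in]]) (simp add: adjoint cproj_orth T' flip: diff)

end

section \<open>C*-algebras\<close>

instance cstar_algebra \<subseteq> banach ..

lemma cstar_zero [simp]: "cstar 0 = (0::'a::cstar_algebra)"
  by (metis add_cancel_right_right add_0 cstar_add)

lemma cstar_minus: "cstar (- x) = - cstar (x::'a::cstar_algebra)"
  by (metis add.inverse_unique add.right_inverse cstar_add cstar_zero)

lemma cstar_diff: "cstar (x - y) = cstar x - cstar (y::'a::cstar_algebra)"
  by (metis cstar_add cstar_minus diff_conv_add_uminus)

lemma cstar_one [simp]: "cstar 1 = (1::'a::cstar_algebra)"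
  by (metis cstar_cstar cstar_mult mult_1_left mult_1_right)

lemma cstar_scaleR: "cstar (scaleR r x) = scaleR r (cstar (x::'a::cstar_algebra))"
  by (simp add: scaleR_scaleC cstar_scaleC)

lemma cstar_power: "cstar (x ^ n) = (cstar x) ^ n" for x :: "'a::cstar_algebra"
  by (induction n) (auto simp: cstar_mult power_commutes)

lemma norm_cstar [simp]: "norm (cstar x) = norm (x::'a::cstar_algebra)"
proof -
  have le: "norm y \<le> norm (cstar y)" for y :: 'a
  proof (cases "y = 0")
    case False
    have "norm y * norm y = norm (cstar y * y)" by (simp add: cstar_identity power2_eq_square)
    also have "\<dots> \<le> norm (cstar y) * norm y" by (rule norm_mult_ineq)
    finally show ?thesis using False by simp
  qed simp
  show ?thesis using le[of x] le[of "cstar x"] by (simp add: cstar_cstar)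
qed

lemma bounded_linear_cstar: "bounded_linear (cstar :: 'a::cstar_algebra \<Rightarrow> 'a)"
  by (rule bounded_linear_intro[where K=1]) (auto simp: cstar_add cstar_scaleR)

lemma abs_gbinomial_half_le_1: "\<bar>(1/2::real) gchoose n\<bar> \<le> 1"
proof (induction n)
  case (Suc k)
  have "(1/2::real) * ((1/2) gchoose k) = of_nat k * ((1/2) gchoose k) + of_nat (Suc k) * ((1/2) gchoose (Suc k))"
    by (rule gbinomial_mult_1)
  then have eq: "((1/2::real) gchoose (Suc k)) = (1/2 - of_nat k) / of_nat (Suc k) * ((1/2) gchoose k)"
    by (simp add: field_simps)
  have "\<bar>(1/2 - real k) / real (Suc k)\<bar> \<le> 1" by (simp add: abs_if field_simps)
  then have "\<bar>((1/2::real) gchoose (Suc k))\<bar> \<le> 1 * 1"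
    unfolding eq abs_mult using Suc.IH by (intro mult_mono) auto
  then show ?case by simp
qed simp

lemma one_gchoose_real: "((1::real) gchoose n) = (if n = 0 \<or> n = 1 then 1 else 0)"
proof -
  have "((1::real) gchoose n) = real (1 choose n)"
    by (metis binomial_gbinomial of_nat_1)
  then show ?thesis by (cases n) (auto simp: binomial_eq_0)
qed

text \<open>The binomial series of \<open>\<surd>(1 - y)\<close>; its square is \<open>1 - y\<close> by the Vandermonde identity.\<close>

definition sqrt_one_minus :: "'a::{real_normed_algebra_1,banach} \<Rightarrow> 'a" where
  "sqrt_one_minus y = (\<Sum>n. ((1/2::real) gchoose n) *\<^sub>R (- y) ^ n)"

lemma summable_norm_sqrt_one_minus:
  fixes y :: "'a::{real_normed_algebra_1,banach}"
  assumes "norm y < 1"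
  shows "summable (\<lambda>n. norm (((1/2::real) gchoose n) *\<^sub>R (- y) ^ n))"
proof (rule summable_comparison_test[OF _ summable_geometric[of "norm y"]])
  have "norm (((1/2::real) gchoose n) *\<^sub>R (- y) ^ n) = \<bar>(1/2::real) gchoose n\<bar> * norm ((- y) ^ n)" for n
    by simp
  also have "\<dots> n \<le> 1 * norm y ^ n" for n
    using abs_gbinomial_half_le_1[of n] norm_power_ineq[of "- y" n] by (intro mult_mono) auto
  finally show "\<exists>N. \<forall>n\<ge>N. norm (norm (((1/2::real) gchoose n) *\<^sub>R (- y) ^ n)) \<le> norm y ^ n" by auto
qed (use assms in auto)

lemma sqrt_one_minus_square:
  fixes y :: "'a::{real_normed_algebra_1,banach}"
  assumes "norm y < 1"
  shows "sqrt_one_minus y * sqrt_one_minus y = 1 - y"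
proof -
  define c where "c = (\<lambda>n. (1/2::real) gchoose n)"
  define f where "f = (\<lambda>n. c n *\<^sub>R (- y) ^ n)"
  have sn: "summable (\<lambda>n. norm (f n))"
    unfolding f_def c_def by (rule summable_norm_sqrt_one_minus[OF assms])
  have "sqrt_one_minus y = suminf f" by (simp add: sqrt_one_minus_def f_def c_def)
  then have "sqrt_one_minus y * sqrt_one_minus y = (\<Sum>k. \<Sum>i\<le>k. f i * f (k - i))"
    using Cauchy_product[OF sn sn] by simp
  also have "\<dots> = (\<Sum>k. ((1::real) gchoose k) *\<^sub>R (- y) ^ k)"
  proof (rule suminf_cong)
    fix k
    have "(\<Sum>i\<le>k. f i * f (k - i)) = (\<Sum>i\<le>k. c i * c (k - i)) *\<^sub>R (- y) ^ k"
      by (simp add: f_def scaleR_sum_left mult.commute power_add[symmetric])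
    also have "(\<Sum>i\<le>k. c i * c (k - i)) = ((1::real) gchoose k)"
      using gbinomial_Vandermonde[of "1/2::real" "1/2" k] by (simp add: c_def atMost_atLeast0)
    finally show "(\<Sum>i\<le>k. f i * f (k - i)) = ((1::real) gchoose k) *\<^sub>R (- y) ^ k" .
  qed
  also have "\<dots> = 1 - y"
  proof -
    have "(\<lambda>k. ((1::real) gchoose k) *\<^sub>R (- y) ^ k) sums (\<Sum>k\<in>{0,1}. ((1::real) gchoose k) *\<^sub>R (- y) ^ k)"
      by (rule sums_finite) (auto simp: one_gchoose_real)
    then show ?thesis by (simp add: sums_iff)
  qed
  finally show ?thesis .
qed

lemma sqrt_one_minus_commute:
  fixes y :: "'a::{real_normed_algebra_1,banach}"
  assumes "norm y < 1" and comm: "a * y = y * a"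
  shows "a * sqrt_one_minus y = sqrt_one_minus y * a"
proof -
  have sf: "summable (\<lambda>n. ((1/2::real) gchoose n) *\<^sub>R (- y) ^ n)"
    by (rule summable_norm_cancel[OF summable_norm_sqrt_one_minus[OF assms(1)]])
  have pow: "a * (- y) ^ n = (- y) ^ n * a" for n
    using power_commuting_commutes[of "- y" a n] comm by simp
  have "a * sqrt_one_minus y = (\<Sum>n. a * (((1/2::real) gchoose n) *\<^sub>R (- y) ^ n))"
    unfolding sqrt_one_minus_def by (rule bounded_linear.suminf[OF bounded_linear_mult_right sf])
  also have "\<dots> = (\<Sum>n. (((1/2::real) gchoose n) *\<^sub>R (- y) ^ n) * a)"
    by (rule suminf_cong) (simp add: pow)
  also have "\<dots> = sqrt_one_minus y * a"
    unfolding sqrt_one_minus_def by (rule bounded_linear.suminf[OF bounded_linear_mult_left sf, symmetric])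
  finally show ?thesis .
qed

lemma cstar_sqrt_one_minus:
  fixes y :: "'a::cstar_algebra"
  assumes "cstar y = y" "norm y < 1"
  shows "cstar (sqrt_one_minus y) = sqrt_one_minus y"
proof -
  have sf: "summable (\<lambda>n. ((1/2::real) gchoose n) *\<^sub>R (- y) ^ n)"
    by (rule summable_norm_cancel[OF summable_norm_sqrt_one_minus[OF assms(2)]])
  show ?thesis
    unfolding sqrt_one_minus_def bounded_linear.suminf[OF bounded_linear_cstar sf]
    by (simp add: cstar_scaleR cstar_power cstar_minus assms(1))
qed

lemma unitary_iff: "u \<in> unitary_group \<longleftrightarrow> u * cstar u = 1 \<and> cstar u * u = 1"
  by (simp add: unitary_group_def)

lemma unitary_one: "1 \<in> (unitary_group::'a::cstar_algebra set)"
  by (simp add: unitary_iff)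

lemma unitary_cstar: "u \<in> unitary_group \<Longrightarrow> cstar u \<in> (unitary_group::'a::cstar_algebra set)"
  by (simp add: unitary_iff cstar_cstar)

lemma unitary_mult:
  assumes "u \<in> unitary_group" "v \<in> unitary_group"
  shows "u * v \<in> (unitary_group::'a::cstar_algebra set)"
proof -
  have "(u * v) * cstar (u * v) = u * (v * cstar v) * cstar u"
    and "cstar (u * v) * (u * v) = cstar v * (cstar u * u) * v"
    by (simp_all add: cstar_mult mult.assoc)
  then show ?thesis using assms by (simp add: unitary_iff)
qed

lemma unitary_left_cancel: "u \<in> unitary_group \<Longrightarrow> u * v = u * v' \<Longrightarrow> v = v'"
  by (metis mult.assoc mult_1_left unitary_iff)

lemma unitary_of_selfadjoint_pair:
  fixes a s :: "'a::cstar_algebra"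
  assumes "cstar a = a" "cstar s = s" and comm: "a * s = s * a" and one: "a * a + s * s = 1"
  shows "a + scaleC \<i> s \<in> unitary_group"
proof -
  have star: "cstar (a + scaleC \<i> s) = a - scaleC \<i> s"
    using assms(1,2) by (simp add: cstar_add cstar_scaleC scaleC_minus_left)
  have "scaleC \<i> s * a = scaleC \<i> (a * s)" "a * scaleC \<i> s = scaleC \<i> (a * s)"
    and "scaleC \<i> s * scaleC \<i> s = - (s * s)"
    by (simp_all add: scaleC_mult_left mult_scaleC_right comm scaleC_scaleC scaleC_minus_left scaleC_one)
  then have "(a + scaleC \<i> s) * (a - scaleC \<i> s) = 1" "(a - scaleC \<i> s) * (a + scaleC \<i> s) = 1"
    by (simp_all add: distrib_left distrib_right left_diff_distrib right_diff_distrib one[symmetric])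
  then show ?thesis by (simp add: unitary_iff star)
qed

lemma selfadjoint_unitary_combination:
  fixes a :: "'a::cstar_algebra"
  assumes sa: "cstar a = a"
  obtains r :: real and w1 w2 where "w1 \<in> unitary_group" "w2 \<in> unitary_group"
    "a = scaleC (complex_of_real r) (w1 + w2)"
proof -
  define r where "r = norm a + 1"
  have "r > 0" by (simp add: r_def add_nonneg_pos)
  define b where "b = scaleC (complex_of_real (1 / r)) a"
  have b_sa: "cstar b = b" by (simp add: b_def cstar_scaleC sa)
  have "norm b = norm a / r" using \<open>r > 0\<close> by (simp add: b_def norm_scaleC norm_divide)
  then have "norm b < 1" using \<open>r > 0\<close> by (simp add: r_def)
  then have "norm (b * b) < 1"
    using cstar_identity[of b] by (simp add: b_sa power_less_one_iff)
  moreover have "cstar (b * b) = b * b" by (simp add: cstar_mult b_sa)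
  ultimately obtain s where s: "cstar s = s" "s * s = 1 - b * b" "b * s = s * b"
    using cstar_sqrt_one_minus sqrt_one_minus_square sqrt_one_minus_commute[of "b * b" b]
    by (metis mult.assoc)
  have "b + scaleC \<i> s \<in> unitary_group" "b + scaleC \<i> (- s) \<in> unitary_group"
    using s b_sa by (auto intro!: unitary_of_selfadjoint_pair simp: cstar_minus)
  moreover have "a = scaleC (complex_of_real (r / 2)) ((b + scaleC \<i> s) + (b + scaleC \<i> (- s)))"
  proof -
    have sum: "(b + scaleC \<i> s) + (b + scaleC \<i> (- s)) = b + b" by (simp add: scaleC_minus_right)
    have "a = scaleC (complex_of_real r) (scaleC (1/2) (b + b))"
      using \<open>r > 0\<close> by (simp add: scaleC_half_double b_def scaleC_scaleC scaleC_one)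
    then show ?thesis unfolding sum by (simp add: scaleC_scaleC)
  qed
  ultimately show ?thesis using that by blast
qed

lemma unitary_span_induct [case_names unitary add scaleC]:
  fixes x :: "'a::cstar_algebra"
  assumes unitary: "\<And>u. u \<in> unitary_group \<Longrightarrow> P u"
    and add: "\<And>a b. P a \<Longrightarrow> P b \<Longrightarrow> P (a + b)"
    and scaleC: "\<And>c a. P a \<Longrightarrow> P (scaleC c a)"
  shows "P x"
proof -
  have selfadjoint: "P a" if "cstar a = a" for a
    using selfadjoint_unitary_combination[OF that] by (metis add scaleC unitary)
  define re where "re = scaleC (1/2) (x + cstar x)"
  define im where "im = scaleC (- \<i> / 2) (x - cstar x)"
  have "cstar re = re" by (simp add: re_def cstar_scaleC cstar_add cstar_cstar add.commute)
  moreover have "cstar im = im"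
  proof -
    have "cstar im = scaleC (\<i> / 2) (cstar x - x)" by (simp add: im_def cstar_scaleC cstar_diff cstar_cstar)
    also have "\<dots> = im"
      by (metis im_def minus_diff_eq scaleC_minus_left scaleC_minus_right minus_divide_left)
    finally show ?thesis .
  qed
  moreover have "x = re + scaleC \<i> im"
  proof -
    have "scaleC \<i> im = scaleC (1/2) (x - cstar x)" by (simp add: im_def scaleC_scaleC)
    then have "re + scaleC \<i> im = scaleC (1/2) ((x + cstar x) + (x - cstar x))"
      by (simp only: re_def scaleC_add_right)
    also have "\<dots> = x" by (simp add: scaleC_half_double)
    finally show ?thesis by simp
  qed
  ultimately show ?thesis using selfadjoint add scaleC by metis
qed

section \<open>States and the GNS representation\<close>

locale cstar_state =
  fixes \<phi> :: "'a::cstar_algebra \<Rightarrow> complex"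
  assumes state: "is_state \<phi>"
begin

lemma \<phi>_add: "\<phi> (x + y) = \<phi> x + \<phi> y"
  using state by (simp add: is_state_def clinear_def)

lemma \<phi>_diff: "\<phi> (x - y) = \<phi> x - \<phi> y"
  by (metis \<phi>_add add_diff_cancel_right' diff_add_cancel)

lemma \<phi>_scaleR: "\<phi> (scaleR r x) = complex_of_real r * \<phi> x"
  using state by (simp add: is_state_def clinear_def scaleC_complex_def scaleR_scaleC)

lemma \<phi>_nonneg: "0 \<le> Re (\<phi> (cstar a * a))"
  using state by (simp add: is_state_def)

lemma sandwich_selfadjoint_le:
  assumes "cstar y = y" "norm y < 1"
  shows "Re (\<phi> (cstar c * y * c)) \<le> Re (\<phi> (cstar c * c))"
proof -
  obtain s where s: "cstar s = s" "s * s = 1 - y"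
    using cstar_sqrt_one_minus[OF assms] sqrt_one_minus_square[OF assms(2)] by blast
  have "cstar (s * c) * (s * c) = cstar c * (s * s) * c"
    by (simp add: cstar_mult s(1) mult.assoc)
  also have "\<dots> = cstar c * c - cstar c * y * c"
    by (simp add: s(2) algebra_simps)
  finally show ?thesis using \<phi>_nonneg[of "s * c"] by (simp add: \<phi>_diff)
qed

lemma sandwich_le_norm: "Re (\<phi> (cstar c * (cstar z * z) * c)) \<le> (norm z)\<^sup>2 * Re (\<phi> (cstar c * c))"
proof -
  define P where "P = Re (\<phi> (cstar c * c))"
  define N where "N = (norm z)\<^sup>2"
  define X where "X = Re (\<phi> (cstar c * (cstar z * z) * c))"
  have "P \<ge> 0" by (simp add: P_def \<phi>_nonneg)
  \<comment> \<open>apply \<open>sandwich_selfadjoint_le\<close> to \<open>y = z\<^sup>* z / (N + \<epsilon>)\<close> and let \<open>\<epsilon> \<rightarrow> 0\<close>\<close>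
  have approx: "X \<le> (N + \<epsilon>) * P" if "\<epsilon> > 0" for \<epsilon>
  proof -
    have "N + \<epsilon> > 0" using that by (simp add: N_def add_nonneg_pos)
    define y where "y = (1 / (N + \<epsilon>)) *\<^sub>R (cstar z * z)"
    have "cstar y = y" by (simp add: y_def cstar_scaleR cstar_mult cstar_cstar)
    moreover have "norm y < 1"
      using \<open>N + \<epsilon> > 0\<close> \<open>\<epsilon> > 0\<close> by (simp add: y_def cstar_identity N_def)
    moreover have "Re (\<phi> (cstar c * y * c)) = X / (N + \<epsilon>)"
      by (simp add: y_def \<phi>_scaleR X_def)
    ultimately have "X / (N + \<epsilon>) \<le> P" using sandwich_selfadjoint_le[of y c] by (simp add: P_def)
    then show ?thesis using \<open>N + \<epsilon> > 0\<close> by (simp add: field_simps)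
  qed
  have "X \<le> N * P"
  proof (rule field_le_epsilon)
    fix e :: real assume "e > 0"
    then have "X \<le> N * P + e / (P + 1) * P"
      using approx[of "e / (P + 1)"] \<open>P \<ge> 0\<close> by (simp add: algebra_simps)
    moreover have "e / (P + 1) * P \<le> e" using \<open>e > 0\<close> \<open>P \<ge> 0\<close> by (simp add: field_simps)
    ultimately show "X \<le> N * P + e" by simp
  qed
  then show ?thesis by (simp add: X_def N_def P_def)
qed

end

locale gns_rep = cstar_state \<phi> for \<phi> :: "'a::cstar_algebra \<Rightarrow> complex" +
  fixes \<Lambda> :: "'a \<Rightarrow> 'h::complex_hilbert" and \<rho> :: "'a \<Rightarrow> 'h \<Rightarrow> 'h"
  assumes GNS: "is_GNS \<phi> \<Lambda> \<rho>"
begin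

lemma \<Lambda>_add: "\<Lambda> (a + b) = \<Lambda> a + \<Lambda> b"
  and \<Lambda>_scaleC: "\<Lambda> (scaleC c a) = scaleC c (\<Lambda> a)"
  and cinner_\<Lambda>: "cinner (\<Lambda> a) (\<Lambda> b) = \<phi> (cstar b * a)"
  and closure_range_\<Lambda>: "closure (range \<Lambda>) = UNIV"
  and \<rho>_\<Lambda>: "\<rho> a (\<Lambda> b) = \<Lambda> (a * b)"
  and bounded_linear_\<rho>: "bounded_linear (\<rho> a)"
  and \<rho>_add: "\<rho> a (x + y) = \<rho> a x + \<rho> a y"
  and \<rho>_scaleC: "\<rho> a (scaleC c x) = scaleC c (\<rho> a x)"
  using GNS by (simp_all add: is_GNS_def clinear_def)

lemma \<Lambda>_diff: "\<Lambda> (a - b) = \<Lambda> a - \<Lambda> b"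
  by (metis \<Lambda>_add diff_add_cancel add_diff_cancel)

lemma \<rho>_diff: "\<rho> a (x - y) = \<rho> a x - \<rho> a y"
  using bounded_linear_\<rho>[of a] by (simp add: linear_simps)

lemma continuous_on_\<rho>: "continuous_on S (\<rho> a)"
  by (rule linear_continuous_on[OF bounded_linear_\<rho>])

lemma continuous_on_\<rho>_compose: "continuous_on S f \<Longrightarrow> continuous_on S (\<lambda>x. \<rho> a (f x))"
  by (rule continuous_on_compose2[OF continuous_on_\<rho>]) auto

lemma continuous_eq_on_range_\<Lambda>:
  fixes f g :: "'h \<Rightarrow> 'z::t2_space"
  assumes "continuous_on UNIV f" "continuous_on UNIV g" "\<And>b. f (\<Lambda> b) = g (\<Lambda> b)"
  shows "f x = g x"
proof -
  have "closure (range \<Lambda>) \<subseteq> {x. f x = g x}"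
    using assms by (intro closure_minimal closed_Collect_eq) auto
  then show ?thesis by (auto simp: closure_range_\<Lambda>)
qed

lemma continuous_le_on_range_\<Lambda>:
  fixes f g :: "'h \<Rightarrow> real"
  assumes "continuous_on UNIV f" "continuous_on UNIV g" "\<And>b. f (\<Lambda> b) \<le> g (\<Lambda> b)"
  shows "f x \<le> g x"
proof -
  have "closure (range \<Lambda>) \<subseteq> {x. f x \<le> g x}"
    using assms by (intro closure_minimal closed_Collect_le) auto
  then show ?thesis by (auto simp: closure_range_\<Lambda>)
qed

lemma \<rho>_one: "\<rho> 1 x = x"
  by (rule continuous_eq_on_range_\<Lambda>[where f="\<rho> 1" and g="\<lambda>x. x"])
     (simp_all add: \<rho>_\<Lambda> continuous_on_\<rho> continuous_on_id)

lemma \<rho>_mult: "\<rho> (a * b) x = \<rho> a (\<rho> b x)"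
  by (rule continuous_eq_on_range_\<Lambda>[where f="\<rho> (a * b)" and g="\<lambda>x. \<rho> a (\<rho> b x)"])
     (simp_all add: \<rho>_\<Lambda> mult.assoc continuous_on_\<rho> continuous_on_\<rho>_compose)

lemma \<rho>_diff_left: "\<rho> (a - b) x = \<rho> a x - \<rho> b x"
  by (rule continuous_eq_on_range_\<Lambda>[where f="\<rho> (a - b)" and g="\<lambda>x. \<rho> a x - \<rho> b x"])
     (simp_all add: \<rho>_\<Lambda> left_diff_distrib \<Lambda>_diff continuous_on_\<rho> continuous_on_diff)

lemma norm_\<rho>_le: "norm (\<rho> z x) \<le> norm z * norm x"
proof (rule continuous_le_on_range_\<Lambda>)
  fix b
  have "(norm (\<rho> z (\<Lambda> b)))\<^sup>2 = Re (\<phi> (cstar b * (cstar z * z) * b))"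
    by (simp add: \<rho>_\<Lambda> power2_norm_eq_cinner cinner_\<Lambda> cstar_mult mult.assoc)
  also have "\<dots> \<le> (norm z * norm (\<Lambda> b))\<^sup>2"
    using sandwich_le_norm[of b z] by (simp add: power2_norm_eq_cinner cinner_\<Lambda> power_mult_distrib)
  finally show "norm (\<rho> z (\<Lambda> b)) \<le> norm z * norm (\<Lambda> b)"
    by (rule power2_le_imp_le) simp
qed (intro continuous_on_norm continuous_on_mult continuous_on_const continuous_on_id
         continuous_on_\<rho>)+

lemma continuous_on_\<rho>_apply: "continuous_on X (\<lambda>a. \<rho> a h)"
proof (rule lipschitz_on_continuous_on)
  show "(norm h)-lipschitz_on X (\<lambda>a. \<rho> a h)"
  proof (rule lipschitz_onI)
    fix a b :: 'a
    show "dist (\<rho> a h) (\<rho> b h) \<le> norm h * dist a b"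
      using norm_\<rho>_le[of "a - b" h] by (simp add: dist_norm \<rho>_diff_left mult.commute)
  qed simp
qed

lemma \<rho>_\<rho>_cstar: "u \<in> unitary_group \<Longrightarrow> \<rho> u (\<rho> (cstar u) x) = x"
  by (metis \<rho>_mult \<rho>_one unitary_iff)

lemma cinner_\<rho>_unitary:
  assumes u: "u \<in> unitary_group"
  shows "cinner (\<rho> u x) (\<rho> u y) = cinner x y"
proof -
  have on_range: "cinner (\<rho> u (\<Lambda> a)) (\<rho> u (\<Lambda> b)) = cinner (\<Lambda> a) (\<Lambda> b)" for a b
  proof -
    have "cstar (u * b) * (u * a) = cstar b * (cstar u * u) * a" by (simp add: cstar_mult mult.assoc)
    then show ?thesis using u by (simp add: \<rho>_\<Lambda> cinner_\<Lambda> unitary_iff)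
  qed
  have on_range_right: "cinner (\<rho> u x) (\<rho> u (\<Lambda> b)) = cinner x (\<Lambda> b)" for b
    by (rule continuous_eq_on_range_\<Lambda>[where f="\<lambda>x. cinner (\<rho> u x) (\<rho> u (\<Lambda> b))"
          and g="\<lambda>x. cinner x (\<Lambda> b)"])
       (auto simp: on_range intro!: continuous_on_cinner continuous_on_\<rho> continuous_on_id
         continuous_on_const)
  show ?thesis
    by (rule continuous_eq_on_range_\<Lambda>[where f="\<lambda>y. cinner (\<rho> u x) (\<rho> u y)" and g="cinner x"])
       (auto simp: on_range_right intro!: continuous_on_cinner continuous_on_\<rho> continuous_on_id
         continuous_on_const)
qed

lemma norm_\<rho>_unitary: "u \<in> unitary_group \<Longrightarrow> norm (\<rho> u x) = norm x"
  by (simp add: norm_cinner cinner_\<rho>_unitary)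

lemma cinner_\<rho>_cstar_left: "u \<in> unitary_group \<Longrightarrow> cinner (\<rho> (cstar u) x) y = cinner x (\<rho> u y)"
  using cinner_\<rho>_unitary[of u "\<rho> (cstar u) x" y] by (simp add: \<rho>_\<rho>_cstar)

lemma orthogonal_\<Lambda>_unitaries_eq_0:
  assumes orth: "\<And>u. u \<in> unitary_group \<Longrightarrow> cinner h (\<Lambda> u) = 0"
  shows "h = 0"
proof -
  have on_range: "cinner h (\<Lambda> a) = 0" for a
  proof (induction a rule: unitary_span_induct)
    case (add a b)
    then show ?case by (simp add: \<Lambda>_add cinner_add_right)
  next
    case (scaleC c a)
    then show ?case by (simp add: \<Lambda>_scaleC cinner_scaleC_right)
  qed (rule orth)
  have "cinner h y = 0" for y
    by (rule continuous_eq_on_range_\<Lambda>[where f="cinner h" and g="\<lambda>_. 0"])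
       (auto simp: on_range intro: continuous_on_cinner continuous_on_const continuous_on_id)
  then show ?thesis using cinner_self_eq_zero by blast
qed

end

section \<open>Quotient topologies\<close>

lemma istopology_quot:
  "istopology (\<lambda>U. U \<subseteq> q ` topspace X \<and> openin X {x \<in> topspace X. q x \<in> U})"
proof -
  have "{x \<in> topspace X. q x \<in> S \<inter> T} = {x \<in> topspace X. q x \<in> S} \<inter> {x \<in> topspace X. q x \<in> T}"
    and "{x \<in> topspace X. q x \<in> \<Union>K} = (\<Union>k\<in>K. {x \<in> topspace X. q x \<in> k})"
    for S T K
    by auto
  then show ?thesis unfolding istopology_def by (auto intro!: openin_Int openin_Union)
qed

lemma openin_quot_top:
  "openin (quot_top X q) U \<longleftrightarrow> U \<subseteq> q ` topspace X \<and> openin X {x \<in> topspace X. q x \<in> U}"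
  unfolding quot_top_def by (simp add: istopology_quot)

lemma topspace_quot_top: "topspace (quot_top X q) = q ` topspace X"
proof
  have "{x \<in> topspace X. q x \<in> q ` topspace X} = topspace X" by auto
  then have "openin (quot_top X q) (q ` topspace X)"
    by (simp add: openin_quot_top)
  then show "q ` topspace X \<subseteq> topspace (quot_top X q)" by (rule openin_subset)
  show "topspace (quot_top X q) \<subseteq> q ` topspace X"
    by (metis openin_quot_top openin_topspace)
qed

lemma continuous_map_quot_top: "continuous_map X (quot_top X q) q"
  unfolding continuous_map by (auto simp: topspace_quot_top openin_quot_top)

lemma continuous_map_from_quot_top:
  assumes "continuous_map X Y (g \<circ> q)"
  shows "continuous_map (quot_top X q) Y g"
  unfolding continuous_map
proof (intro conjI allI impI)
  show "g ` topspace (quot_top X q) \<subseteq> topspace Y"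
    using assms by (auto simp: topspace_quot_top continuous_map)
  fix U assume "openin Y U"
  then have "openin X {x \<in> topspace X. (g \<circ> q) x \<in> U}"
    using assms by (auto simp: continuous_map)
  moreover have "{x \<in> topspace X. q x \<in> {y \<in> topspace (quot_top X q). g y \<in> U}} = {x \<in> topspace X. (g \<circ> q) x \<in> U}"
    by (auto simp: topspace_quot_top)
  ultimately show "openin (quot_top X q) {x \<in> topspace (quot_top X q). g x \<in> U}"
    by (auto simp: openin_quot_top topspace_quot_top)
qed

section \<open>The homogeneous bundle\<close>

context
  fixes B :: "'a::cstar_algebra set"
  assumes B: "unital_sub_cstar B"
begin

lemma UB_one: "1 \<in> UB B"
  using B unitary_one by (simp add: unital_sub_cstar_def)

lemma UB_mult: "v \<in> UB B \<Longrightarrow> w \<in> UB B \<Longrightarrow> v * w \<in> UB B"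
  using B by (auto simp: unital_sub_cstar_def intro: unitary_mult)

lemma UB_cstar: "v \<in> UB B \<Longrightarrow> cstar v \<in> UB B"
  using B by (auto simp: unital_sub_cstar_def intro: unitary_cstar)

lemma image_mult_left_UB: "w \<in> UB B \<Longrightarrow> (\<lambda>v. w * v) ` UB B = UB B"
proof
  assume w: "w \<in> UB B"
  show "(\<lambda>v. w * v) ` UB B \<subseteq> UB B" using UB_mult w by auto
  show "UB B \<subseteq> (\<lambda>v. w * v) ` UB B"
  proof
    fix v assume v: "v \<in> UB B"
    have "v = w * (cstar w * v)" using w by (simp add: unitary_iff mult.assoc[symmetric])
    moreover have "cstar w * v \<in> UB B" using UB_mult UB_cstar v w by blast
    ultimately show "v \<in> (\<lambda>v. w * v) ` UB B" by blast
  qed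
qed

lemma lcoset_mult_right:
  assumes "w \<in> UB B"
  shows "lcoset B (u * w) = lcoset B u"
proof -
  have "lcoset B (u * w) = (\<lambda>v. u * v) ` ((\<lambda>v. w * v) ` UB B)"
    by (simp add: lcoset_def image_image mult.assoc)
  then show ?thesis by (simp add: image_mult_left_UB[OF assms] lcoset_def)
qed

lemma lcoset_eqD: "lcoset B u = lcoset B u' \<Longrightarrow> \<exists>w\<in>UB B. u' = u * w"
proof -
  assume "lcoset B u = lcoset B u'"
  moreover have "u' \<in> lcoset B u'" unfolding lcoset_def using UB_one by (metis image_eqI mult_1_right)
  ultimately show ?thesis unfolding lcoset_def by blast
qed

end

lemma homspaceE:
  assumes "s \<in> homspace B"
  obtains u where "u \<in> unitary_group" "s = lcoset B u"
  using assms by (auto simp: homspace_def)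

lemma hom_act_lcoset: "hom_act v (lcoset B u) = lcoset B (v * u)"
  by (simp add: hom_act_def lcoset_def image_image mult.assoc)

lemma bact_bcls: "bact v (bcls \<rho> B u f) = bcls \<rho> B (v * u) f"
  by (simp add: bact_def bcls_def image_image mult.assoc)

locale gns_sub = gns_rep \<phi> \<Lambda> \<rho>
  for \<phi> :: "'a::cstar_algebra \<Rightarrow> complex" and \<Lambda> :: "'a \<Rightarrow> 'h::complex_hilbert" and \<rho> +
  fixes B :: "'a set"
  assumes sub: "unital_sub_cstar B"
begin

abbreviation "H\<phi> \<equiv> Hphi \<Lambda> B"
abbreviation "P\<phi> \<equiv> cproj H\<phi>"

lemma csubspace_H\<phi>: "csubspace H\<phi>"
proof -
  have "csubspace (\<Lambda> ` B)"
    unfolding csubspace_def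
  proof (intro conjI ballI allI)
    have "0 \<in> B" using sub unfolding unital_sub_cstar_def by (metis scaleC_zero_left)
    then show "0 \<in> \<Lambda> ` B" by (metis \<Lambda>_scaleC image_eqI scaleC_zero_left)
    fix c x y assume "x \<in> \<Lambda> ` B" "y \<in> \<Lambda> ` B"
    then obtain a b where ab: "a \<in> B" "b \<in> B" and xy: "x = \<Lambda> a" "y = \<Lambda> b" by blast
    have "a + b \<in> B" "scaleC c a \<in> B" using sub ab by (simp_all add: unital_sub_cstar_def)
    then show "x + y \<in> \<Lambda> ` B" "scaleC c x \<in> \<Lambda> ` B"
      unfolding xy by (metis \<Lambda>_add image_eqI, metis \<Lambda>_scaleC image_eqI)
  qed
  then show ?thesis unfolding Hphi_def by (rule csubspace_closure)
qed

lemma closed_H\<phi>: "closed H\<phi>"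
  by (simp add: Hphi_def)

lemmas P\<phi>_in = cproj_in[OF csubspace_H\<phi> closed_H\<phi>]
  and cinner_P\<phi>_left = cinner_cproj_left[OF csubspace_H\<phi> closed_H\<phi>]
  and P\<phi>_add = cproj_add[OF csubspace_H\<phi> closed_H\<phi>]
  and P\<phi>_scaleC = cproj_scaleC[OF csubspace_H\<phi> closed_H\<phi>]
  and P\<phi>_diff = cproj_diff[OF csubspace_H\<phi> closed_H\<phi>]
  and norm_P\<phi>_le = norm_cproj_le[OF csubspace_H\<phi> closed_H\<phi>]
  and continuous_on_P\<phi> = continuous_on_cproj[OF csubspace_H\<phi> closed_H\<phi>]

lemma \<Lambda>_in_H\<phi>: "b \<in> B \<Longrightarrow> \<Lambda> b \<in> H\<phi>"
  unfolding Hphi_def by (rule closure_subset[THEN subsetD]) (rule imageI)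

lemma \<rho>_in_H\<phi>:
  assumes "b \<in> B" "x \<in> H\<phi>"
  shows "\<rho> b x \<in> H\<phi>"
proof -
  have "\<rho> b ` closure (\<Lambda> ` B) \<subseteq> H\<phi>"
  proof (rule image_closure_subset[OF continuous_on_\<rho> closed_H\<phi>])
    show "\<rho> b ` \<Lambda> ` B \<subseteq> H\<phi>"
      using \<open>b \<in> B\<close> sub by (auto simp: \<rho>_\<Lambda> unital_sub_cstar_def intro!: \<Lambda>_in_H\<phi>)
  qed
  then show ?thesis using \<open>x \<in> H\<phi>\<close> by (auto simp: Hphi_def)
qed

lemma P\<phi>_\<rho>_commute:
  assumes w: "w \<in> UB B"
  shows "P\<phi> (\<rho> w x) = \<rho> w (P\<phi> x)"
proof (rule cproj_commute[OF csubspace_H\<phi> closed_H\<phi>])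
  have "w \<in> B" "cstar w \<in> B" using w sub by (auto simp: unital_sub_cstar_def)
  then show "\<And>x. x \<in> H\<phi> \<Longrightarrow> \<rho> w x \<in> H\<phi>" "\<And>x. x \<in> H\<phi> \<Longrightarrow> \<rho> (cstar w) x \<in> H\<phi>"
    by (simp_all add: \<rho>_in_H\<phi>)
  show "cinner (\<rho> w x) y = cinner x (\<rho> (cstar w) y)" for x y
    using cinner_\<rho>_cstar_left[OF unitary_cstar, of w] w by (simp add: cstar_cstar)
qed (rule \<rho>_diff)

lemma bcls_mem: "(u, f) \<in> bcls \<rho> B u f"
  unfolding bcls_def using UB_one[OF sub] by (intro image_eqI[where x=1]) (simp_all add: \<rho>_one)

lemma bcls_mult_right:
  assumes "w \<in> UB B"
  shows "bcls \<rho> B (u * w) (\<rho> (cstar w) f) = bcls \<rho> B u f"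
proof -
  have "bcls \<rho> B (u * w) (\<rho> (cstar w) f) = (\<lambda>v. (u * v, \<rho> (cstar v) f)) ` ((\<lambda>v. w * v) ` UB B)"
    unfolding bcls_def image_image by (rule image_cong) (simp_all add: mult.assoc cstar_mult \<rho>_mult)
  then show ?thesis by (simp add: image_mult_left_UB[OF sub assms] bcls_def)
qed

lemma bcls_eqD:
  assumes "bcls \<rho> B u f = bcls \<rho> B u' f'"
  shows "\<exists>v\<in>UB B. u' = u * v \<and> f' = \<rho> (cstar v) f"
proof -
  have "(u', f') \<in> bcls \<rho> B u f" using bcls_mem[of u' f'] assms by simp
  then show ?thesis unfolding bcls_def by auto
qed

lemma bcls_eq_pairD:
  assumes "u \<in> unitary_group" "bcls \<rho> B u f = bcls \<rho> B u' f'" "bcls \<rho> B u g = bcls \<rho> B u' g'"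
  shows "\<exists>v\<in>UB B. u' = u * v \<and> f' = \<rho> (cstar v) f \<and> g' = \<rho> (cstar v) g"
  using bcls_eqD[OF assms(2)] bcls_eqD[OF assms(3)] unitary_left_cancel[OF assms(1)] by metis

lemma bcls_inj: "u \<in> unitary_group \<Longrightarrow> bcls \<rho> B u f = bcls \<rho> B u g \<Longrightarrow> f = g"
  using bcls_eqD[of u f u g] unitary_left_cancel[of u 1] by (fastforce simp: \<rho>_one)

lemma bproj_bcls: "bproj B (bcls \<rho> B u f) = lcoset B u"
  unfolding bproj_def
proof (rule the_equality)
  show "\<forall>p\<in>bcls \<rho> B u f. lcoset B u = lcoset B (fst p)"
    unfolding bcls_def by (auto simp: lcoset_mult_right[OF sub])
  fix s assume "\<forall>p\<in>bcls \<rho> B u f. s = lcoset B (fst p)"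
  then show "s = lcoset B u" using bcls_mem[of u f] by fastforce
qed

lemma fiberE:
  assumes "\<xi> \<in> fiber \<Lambda> \<rho> B t"
  obtains u f where "u \<in> unitary_group" "f \<in> H\<phi>" "\<xi> = bcls \<rho> B u f" "t = lcoset B u"
  using assms unfolding fiber_def hbundle_def by (auto simp: bproj_bcls)

lemma realiz_lcoset:
  assumes u: "u \<in> unitary_group"
  shows "realiz \<Lambda> \<rho> B h (lcoset B u) = bcls \<rho> B u (P\<phi> (\<rho> (cstar u) h))"
  unfolding realiz_def
proof (rule the_equality)
  fix \<xi> assume "\<exists>u'\<in>unitary_group. lcoset B u = lcoset B u' \<and> \<xi> = bcls \<rho> B u' (P\<phi> (\<rho> (cstar u') h))"
  then obtain u' where u': "lcoset B u = lcoset B u'" "\<xi> = bcls \<rho> B u' (P\<phi> (\<rho> (cstar u') h))" by blast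
  obtain w where w: "w \<in> UB B" "u' = u * w" using lcoset_eqD[OF sub u'(1)] by blast
  have "P\<phi> (\<rho> (cstar u') h) = \<rho> (cstar w) (P\<phi> (\<rho> (cstar u) h))"
    using w(2) P\<phi>_\<rho>_commute[OF UB_cstar[OF sub w(1)]] by (simp add: cstar_mult \<rho>_mult)
  then show "\<xi> = bcls \<rho> B u (P\<phi> (\<rho> (cstar u) h))"
    using u'(2) w bcls_mult_right by simp
qed (use u in blast)

lemma finner_bcls:
  assumes "u \<in> unitary_group" "f \<in> H\<phi>" "g \<in> H\<phi>"
  shows "finner \<Lambda> \<rho> B (bcls \<rho> B u f) (bcls \<rho> B u g) = cinner f g"
  unfolding finner_def
proof (rule the_equality)
  fix c assume "\<exists>u' f' g'. u' \<in> unitary_group \<and> f' \<in> H\<phi> \<and> g' \<in> H\<phi> \<and>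
      bcls \<rho> B u f = bcls \<rho> B u' f' \<and> bcls \<rho> B u g = bcls \<rho> B u' g' \<and> c = cinner f' g'"
  then obtain u' f' g' where h: "bcls \<rho> B u f = bcls \<rho> B u' f'" "bcls \<rho> B u g = bcls \<rho> B u' g'"
      "c = cinner f' g'" by blast
  obtain v where "v \<in> UB B" "f' = \<rho> (cstar v) f" "g' = \<rho> (cstar v) g"
    using bcls_eq_pairD[OF assms(1) h(1,2)] by blast
  then show "c = cinner f g" using h(3) by (simp add: cinner_\<rho>_unitary unitary_cstar)
qed (use assms in blast)

lemma fadd_bcls:
  assumes "u \<in> unitary_group" "f \<in> H\<phi>" "g \<in> H\<phi>"
  shows "fadd \<Lambda> \<rho> B (bcls \<rho> B u f) (bcls \<rho> B u g) = bcls \<rho> B u (f + g)"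
  unfolding fadd_def
proof (rule the_equality)
  fix \<zeta> assume "\<exists>u' f' g'. u' \<in> unitary_group \<and> f' \<in> H\<phi> \<and> g' \<in> H\<phi> \<and>
      bcls \<rho> B u f = bcls \<rho> B u' f' \<and> bcls \<rho> B u g = bcls \<rho> B u' g' \<and> \<zeta> = bcls \<rho> B u' (f' + g')"
  then obtain u' f' g' where h: "bcls \<rho> B u f = bcls \<rho> B u' f'" "bcls \<rho> B u g = bcls \<rho> B u' g'"
      "\<zeta> = bcls \<rho> B u' (f' + g')" by blast
  obtain v where "v \<in> UB B" "u' = u * v" "f' + g' = \<rho> (cstar v) (f + g)"
    using bcls_eq_pairD[OF assms(1) h(1,2)] by (auto simp: \<rho>_add)
  then show "\<zeta> = bcls \<rho> B u (f + g)" using h(3) by (simp add: bcls_mult_right)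
qed (use assms in blast)

lemma fscale_bcls:
  assumes "u \<in> unitary_group" "f \<in> H\<phi>"
  shows "fscale \<Lambda> \<rho> B c (bcls \<rho> B u f) = bcls \<rho> B u (scaleC c f)"
  unfolding fscale_def
proof (rule the_equality)
  fix \<zeta> assume "\<exists>u' f'. u' \<in> unitary_group \<and> f' \<in> H\<phi> \<and>
      bcls \<rho> B u f = bcls \<rho> B u' f' \<and> \<zeta> = bcls \<rho> B u' (scaleC c f')"
  then obtain u' f' where h: "bcls \<rho> B u f = bcls \<rho> B u' f'" "\<zeta> = bcls \<rho> B u' (scaleC c f')"
    by blast
  obtain v where "v \<in> UB B" "u' = u * v" "scaleC c f' = \<rho> (cstar v) (scaleC c f)"
    using bcls_eqD[OF h(1)] by (auto simp: \<rho>_scaleC)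
  then show "\<zeta> = bcls \<rho> B u (scaleC c f)" using h(2) by (simp add: bcls_mult_right)
qed (use assms in blast)

lemma kern_lcoset:
  assumes u1: "u1 \<in> unitary_group" and u2: "u2 \<in> unitary_group" and f: "f \<in> H\<phi>"
  shows "kern \<Lambda> \<rho> B (lcoset B u1) (lcoset B u2) (bcls \<rho> B u2 f)
    = bcls \<rho> B u1 (P\<phi> (\<rho> (cstar u1 * u2) f))"
  unfolding kern_def
proof (rule the_equality)
  fix \<zeta> assume "\<exists>u1' u2' f'. u1' \<in> unitary_group \<and> u2' \<in> unitary_group \<and> f' \<in> H\<phi> \<and>
      lcoset B u1 = lcoset B u1' \<and> lcoset B u2 = lcoset B u2' \<and> bcls \<rho> B u2 f = bcls \<rho> B u2' f' \<and>
      \<zeta> = bcls \<rho> B u1' (P\<phi> (\<rho> (cstar u1' * u2') f'))"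
  then obtain u1' u2' f' where h: "lcoset B u1 = lcoset B u1'" "bcls \<rho> B u2 f = bcls \<rho> B u2' f'"
      "\<zeta> = bcls \<rho> B u1' (P\<phi> (\<rho> (cstar u1' * u2') f'))" by blast
  obtain w where w: "w \<in> UB B" "u1' = u1 * w" using lcoset_eqD[OF sub h(1)] by blast
  obtain v where v: "v \<in> UB B" "u2' = u2 * v" "f' = \<rho> (cstar v) f" using bcls_eqD[OF h(2)] by blast
  have "\<rho> (cstar u1' * u2') f' = \<rho> (cstar w) (\<rho> (cstar u1 * u2) (\<rho> v (\<rho> (cstar v) f)))"
    using w(2) v(2,3) by (simp add: cstar_mult \<rho>_mult mult.assoc)
  also have "\<dots> = \<rho> (cstar w) (\<rho> (cstar u1 * u2) f)" using v(1) by (simp add: \<rho>_\<rho>_cstar)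
  finally have "P\<phi> (\<rho> (cstar u1' * u2') f') = \<rho> (cstar w) (P\<phi> (\<rho> (cstar u1 * u2) f))"
    by (simp add: P\<phi>_\<rho>_commute[OF UB_cstar[OF sub w(1)]])
  then show "\<zeta> = bcls \<rho> B u1 (P\<phi> (\<rho> (cstar u1 * u2) f))"
    using h(3) w bcls_mult_right by simp
qed (use assms in blast)

definition ev_adjoint :: "('a \<times> 'h) set \<Rightarrow> 'h" where
  "ev_adjoint \<xi> = (THE x. \<exists>u f. u \<in> unitary_group \<and> f \<in> H\<phi> \<and> \<xi> = bcls \<rho> B u f \<and> x = \<rho> u f)"

lemma ev_adjoint_bcls:
  assumes "u \<in> unitary_group" "f \<in> H\<phi>"
  shows "ev_adjoint (bcls \<rho> B u f) = \<rho> u f"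
  unfolding ev_adjoint_def
proof (rule the_equality)
  fix x assume "\<exists>u' f'. u' \<in> unitary_group \<and> f' \<in> H\<phi> \<and> bcls \<rho> B u f = bcls \<rho> B u' f' \<and> x = \<rho> u' f'"
  then obtain u' f' where h: "bcls \<rho> B u f = bcls \<rho> B u' f'" "x = \<rho> u' f'" by blast
  obtain v where "v \<in> UB B" "u' = u * v" "f' = \<rho> (cstar v) f" using bcls_eqD[OF h(1)] by blast
  then show "x = \<rho> u f" using h(2) by (simp add: \<rho>_mult \<rho>_\<rho>_cstar)
qed (use assms in blast)

lemma realiz_in_fiber: "s \<in> homspace B \<Longrightarrow> realiz \<Lambda> \<rho> B h s \<in> fiber \<Lambda> \<rho> B s"
  by (elim homspaceE) (simp add: fiber_def hbundle_def realiz_lcoset bproj_bcls, use P\<phi>_in in blast)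

lemma continuous_map_realiz: "continuous_map (hom_top B) (bundle_top \<Lambda> \<rho> B) (realiz \<Lambda> \<rho> B h)"
  unfolding hom_top_def
proof (rule continuous_map_from_quot_top)
  have "continuous_on unitary_group (\<lambda>u. P\<phi> (\<rho> (cstar u) h))"
    by (intro continuous_on_compose2[OF continuous_on_P\<phi>] continuous_on_compose2[OF continuous_on_\<rho>_apply]
          linear_continuous_on bounded_linear_cstar) auto
  then have "continuous_map (top_of_set unitary_group) (prod_topology (top_of_set unitary_group) (top_of_set H\<phi>))
      (\<lambda>u. (u, P\<phi> (\<rho> (cstar u) h)))"
    by (auto simp: continuous_map_subtopology_eu P\<phi>_in intro!: continuous_on_Pair continuous_on_id)
  then have "continuous_map (top_of_set unitary_group) (bundle_top \<Lambda> \<rho> B)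
      ((\<lambda>(u, f). bcls \<rho> B u f) \<circ> (\<lambda>u. (u, P\<phi> (\<rho> (cstar u) h))))"
    unfolding bundle_top_def by (rule continuous_map_compose[OF _ continuous_map_quot_top])
  then show "continuous_map (top_of_set unitary_group) (bundle_top \<Lambda> \<rho> B) (realiz \<Lambda> \<rho> B h \<circ> lcoset B)"
    by (rule continuous_map_eq) (simp add: realiz_lcoset)
qed

lemma realiz_inj:
  assumes eq: "\<forall>s\<in>homspace B. realiz \<Lambda> \<rho> B h1 s = realiz \<Lambda> \<rho> B h2 s"
  shows "h1 = h2"
proof -
  have "cinner (h1 - h2) (\<Lambda> u) = 0" if u: "u \<in> unitary_group" for u
  proof -
    have "realiz \<Lambda> \<rho> B h1 (lcoset B u) = realiz \<Lambda> \<rho> B h2 (lcoset B u)"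
      using eq u by (simp add: homspace_def)
    then have "P\<phi> (\<rho> (cstar u) h1) = P\<phi> (\<rho> (cstar u) h2)"
      by (intro bcls_inj[OF u]) (simp add: realiz_lcoset[OF u])
    then have "P\<phi> (\<rho> (cstar u) (h1 - h2)) = 0"
      by (simp add: \<rho>_diff P\<phi>_diff)
    \<comment> \<open>\<open>\<Lambda>(u) = \<rho>(u) \<Lambda>(1)\<close> with \<open>\<Lambda>(1) \<in> H\<^sub>\<phi>\<close>\<close>
    moreover have "\<Lambda> 1 \<in> H\<phi>" using sub by (simp add: \<Lambda>_in_H\<phi> unital_sub_cstar_def)
    ultimately show ?thesis
      using u by (metis \<rho>_\<Lambda> mult_1_right cinner_\<rho>_cstar_left cinner_P\<phi>_left cinner_zero_left)
  qed
  then show ?thesis using orthogonal_\<Lambda>_unitaries_eq_0 by fastforce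
qed

lemma realiz_add:
  "s \<in> homspace B \<Longrightarrow>
    realiz \<Lambda> \<rho> B (h1 + h2) s = fadd \<Lambda> \<rho> B (realiz \<Lambda> \<rho> B h1 s) (realiz \<Lambda> \<rho> B h2 s)"
  by (elim homspaceE) (simp add: realiz_lcoset fadd_bcls P\<phi>_in \<rho>_add P\<phi>_add)

lemma realiz_scaleC:
  "s \<in> homspace B \<Longrightarrow> realiz \<Lambda> \<rho> B (scaleC c h) s = fscale \<Lambda> \<rho> B c (realiz \<Lambda> \<rho> B h s)"
  by (elim homspaceE) (simp add: realiz_lcoset fscale_bcls P\<phi>_in \<rho>_scaleC P\<phi>_scaleC)

lemma norm_realiz_le:
  assumes "s \<in> homspace B"
  shows "sqrt (Re (finner \<Lambda> \<rho> B (realiz \<Lambda> \<rho> B h s) (realiz \<Lambda> \<rho> B h s))) \<le> norm h"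
proof -
  obtain u where u: "u \<in> unitary_group" "s = lcoset B u" using assms by (rule homspaceE)
  then have "sqrt (Re (finner \<Lambda> \<rho> B (realiz \<Lambda> \<rho> B h s) (realiz \<Lambda> \<rho> B h s)))
      = norm (P\<phi> (\<rho> (cstar u) h))"
    by (simp add: realiz_lcoset finner_bcls P\<phi>_in norm_cinner)
  also have "\<dots> \<le> norm h"
    using norm_P\<phi>_le norm_\<rho>_unitary[OF unitary_cstar[OF u(1)]] by metis
  finally show ?thesis .
qed

lemma finner_realiz_ev_adjoint:
  assumes "\<xi> \<in> fiber \<Lambda> \<rho> B t"
  shows "finner \<Lambda> \<rho> B (realiz \<Lambda> \<rho> B h t) \<xi> = cinner h (ev_adjoint \<xi>)"
proof -
  obtain u f where uf: "u \<in> unitary_group" "f \<in> H\<phi>" "\<xi> = bcls \<rho> B u f" "t = lcoset B u"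
    using assms by (rule fiberE)
  then have "finner \<Lambda> \<rho> B (realiz \<Lambda> \<rho> B h t) \<xi> = cinner (P\<phi> (\<rho> (cstar u) h)) f"
    by (simp add: realiz_lcoset finner_bcls P\<phi>_in)
  also have "\<dots> = cinner h (\<rho> u f)"
    using uf by (simp add: cinner_P\<phi>_left cinner_\<rho>_cstar_left)
  finally show ?thesis using uf by (simp add: ev_adjoint_bcls)
qed

lemma kern_eq_realiz_ev_adjoint:
  assumes "s \<in> homspace B" "\<xi> \<in> fiber \<Lambda> \<rho> B t"
  shows "kern \<Lambda> \<rho> B s t \<xi> = realiz \<Lambda> \<rho> B (ev_adjoint \<xi>) s"
proof -
  obtain u f where "u \<in> unitary_group" "f \<in> H\<phi>" "\<xi> = bcls \<rho> B u f" "t = lcoset B u"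
    using assms(2) by (rule fiberE)
  moreover obtain u1 where "u1 \<in> unitary_group" "s = lcoset B u1"
    using assms(1) by (rule homspaceE)
  ultimately show ?thesis by (simp add: kern_lcoset ev_adjoint_bcls realiz_lcoset \<rho>_mult)
qed

lemma realiz_\<rho>:
  assumes v: "v \<in> unitary_group" and "s \<in> homspace B"
  shows "realiz \<Lambda> \<rho> B (\<rho> v h) s = bact v (realiz \<Lambda> \<rho> B h (hom_act (cstar v) s))"
proof -
  obtain u where u: "u \<in> unitary_group" "s = lcoset B u" using assms(2) by (rule homspaceE)
  have "cstar v * u \<in> unitary_group" by (intro unitary_mult unitary_cstar v u(1))
  moreover have "v * (cstar v * u) = u" using v by (simp add: unitary_iff flip: mult.assoc)
  ultimately show ?thesis
    using u by (simp add: hom_act_lcoset realiz_lcoset bact_bcls cstar_mult cstar_cstar \<rho>_mult)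
qed

end

theorem theorem5p4:
  fixes B :: "'a::cstar_algebra set"
    and \<phi> :: "'a \<Rightarrow> complex"
    and \<Lambda> :: "'a \<Rightarrow> 'h::complex_hilbert"
    and \<rho> :: "'a \<Rightarrow> 'h \<Rightarrow> 'h"
  assumes B: "unital_sub_cstar B"
    and state: "is_state \<phi>"
    and E: "\<exists>E. cond_exp E B \<and> (\<forall>a. \<phi> (E a) = \<phi> a)"
    and GNS: "is_GNS \<phi> \<Lambda> \<rho>"
  shows
    \<comment> \<open>(1) \<iota> maps H into continuous sections of D and is injective\<close>
    "(\<forall>h. continuous_map (hom_top B) (bundle_top \<Lambda> \<rho> B) (realiz \<Lambda> \<rho> B h) \<and>
          (\<forall>s\<in>homspace B. realiz \<Lambda> \<rho> B h s \<in> fiber \<Lambda> \<rho> B s)) \<and>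
     (\<forall>h1 h2. (\<forall>s\<in>homspace B. realiz \<Lambda> \<rho> B h1 s = realiz \<Lambda> \<rho> B h2 s) \<longrightarrow> h1 = h2) \<and>
    \<comment> \<open>(2) each evaluation map ev_s is bounded linear H \<rightarrow> D_s\<close>
     (\<forall>s\<in>homspace B.
        (\<forall>h1 h2. realiz \<Lambda> \<rho> B (h1 + h2) s = fadd \<Lambda> \<rho> B (realiz \<Lambda> \<rho> B h1 s) (realiz \<Lambda> \<rho> B h2 s)) \<and>
        (\<forall>c h. realiz \<Lambda> \<rho> B (scaleC c h) s = fscale \<Lambda> \<rho> B c (realiz \<Lambda> \<rho> B h s)) \<and>
        (\<exists>C. \<forall>h. sqrt (Re (finner \<Lambda> \<rho> B (realiz \<Lambda> \<rho> B h s) (realiz \<Lambda> \<rho> B h s))) \<le> C * norm h)) \<and>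
    \<comment> \<open>(3) K(s,t) = ev_s (ev_t)^*\<close>
     (\<forall>s\<in>homspace B. \<forall>t\<in>homspace B. \<exists>T.
        (\<forall>h. \<forall>\<xi>\<in>fiber \<Lambda> \<rho> B t. finner \<Lambda> \<rho> B (realiz \<Lambda> \<rho> B h t) \<xi> = cinner h (T \<xi>)) \<and>
        (\<forall>\<xi>\<in>fiber \<Lambda> \<rho> B t. kern \<Lambda> \<rho> B s t \<xi> = realiz \<Lambda> \<rho> B (T \<xi>) s)) \<and>
    \<comment> \<open>(4) intertwining property\<close>
     (\<forall>v\<in>unitary_group. \<forall>h. \<forall>s\<in>homspace B.
        realiz \<Lambda> \<rho> B (\<rho> v h) s = bact v (realiz \<Lambda> \<rho> B h (hom_act (cstar v) s)))"
proof -
  interpret gns_sub \<phi> \<Lambda> \<rho> B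
    by unfold_locales (fact state GNS B)+
  have bounded: "\<exists>C. \<forall>h. sqrt (Re (finner \<Lambda> \<rho> B (realiz \<Lambda> \<rho> B h s) (realiz \<Lambda> \<rho> B h s))) \<le> C * norm h"
    if "s \<in> homspace B" for s
    using norm_realiz_le[OF that] by (intro exI[of _ 1]) simp
  have kernel: "\<exists>T. (\<forall>h. \<forall>\<xi>\<in>fiber \<Lambda> \<rho> B t. finner \<Lambda> \<rho> B (realiz \<Lambda> \<rho> B h t) \<xi> = cinner h (T \<xi>)) \<and>
      (\<forall>\<xi>\<in>fiber \<Lambda> \<rho> B t. kern \<Lambda> \<rho> B s t \<xi> = realiz \<Lambda> \<rho> B (T \<xi>) s)"
    if "s \<in> homspace B" for s t
    using finner_realiz_ev_adjoint kern_eq_realiz_ev_adjoint[OF that] by blast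
  show ?thesis
    by (intro conjI allI ballI impI continuous_map_realiz realiz_in_fiber realiz_add realiz_scaleC
        bounded kernel realiz_\<rho>) (assumption | erule realiz_inj)+
qed

end
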